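(* Let $(H,\alpha)$ be a monoidal Hom-Hopf algebra with bijective antipode, let $(\Gamma,\gamma)$ be a left-covariant $(H,\alpha)$-Hom-FODC with differential $d$, and let $\mathcal{T}_\Gamma$ be its quantum Hom-tangent space, with automorphism $\bar\alpha'(X)=X\circ\alpha^{-1}$. Then there is a unique bilinear form $\langle\cdot,\cdot\rangle:\mathcal{T}_\Gamma\times\Gamma\to k$ which is a morphism in $\widetilde{\mathcal{H}}(\mathcal{M}_k)$ (i.e. $\langle X\circ\alpha^{-1},\gamma(\varrho)\rangle=\langle X,\varrho\rangle$) such that $$\langle X,h\cdot dg\rangle=\varepsilon(h)X(g)\quad\text{for all }g,h\in H,\ X\in\mathcal{T}_\Gamma.$$ With respect to this form, $\mathcal{T}_\Gamma$ and ${}^{coH}\Gamma=\omega_\Gamma(H)$ (with automorphism $\gamma|_{{}^{coH}\Gamma}$) form a nondegenerate dual pairing. Moreover $\langle X,\omega_\Gamma(h)\rangle=X(\alpha^{-1}(h))$ for all $h\in H$, $X\in\mathcal{T}_\Gamma$.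
   Context: All vector spaces are over a field $k$; $\widetilde{\mathcal{H}}(\mathcal{M}_k)$ has objects $(M,\mu)$ with $\mu$ a linear automorphism, morphisms commuting with the automorphisms. A monoidal Hom-Hopf algebra $(H,\alpha)$: multiplication with $\alpha(ab)=\alpha(a)\alpha(b)$, $\alpha(1)=1$, $\alpha(a)(bc)=(ab)\alpha(c)$, $1a=a1=\alpha(a)$; comultiplication $\Delta(h)=h_1\otimes h_2$ and counit $\varepsilon$ (algebra maps commuting with $\alpha$) with $\alpha^{-1}(h_1)\otimes h_{21}\otimes h_{22}=h_{11}\otimes h_{12}\otimes\alpha^{-1}(h_2)$, $\varepsilon(h_1)h_2=h_1\varepsilon(h_2)=\alpha^{-1}(h)$; antipode $S$ commuting with $\alpha$ with $S(h_1)h_2=h_1S(h_2)=\varepsilon(h)1$. Hom-bimodule $(M,\mu)$: $\alpha(a)\cdot(b\cdot m)=(ab)\cdot\mu(m)$, $1\cdot m=\mu(m)$, $(m\cdot a)\cdot\alpha(b)=\mu(m)\cdot(ab)$, $m\cdot1=\mu(m)$, $\alpha(a)\cdot(m\cdot b)=(a\cdot m)\cdot\alpha(b)$. Left Hom-comodule: $\rho(m)=m_{(-1)}\otimes m_{(0)}$ with $\alpha^{-1}(m_{(-1)})\otimes m_{(0)(-1)}\otimes m_{(0)(0)}=m_{(-1)1}\otimes m_{(-1)2}\otimes\mu^{-1}(m_{(0)})$, $\varepsilon(m_{(-1)})m_{(0)}=\mu^{-1}(m)$. A Hom-FODC over $(H,\alpha)$: an $(H,\alpha)$-Hom-bimodule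 $(\Gamma,\gamma)$ with linear $d:H\to\Gamma$, $d(hg)=h\cdot dg+dh\cdot g$, $d\circ\alpha=\gamma\circ d$, $\Gamma$ spanned by $(h\cdot dg)\cdot f$. Left-covariant: there is a left Hom-coaction $\phi(\omega)=\omega_{(-1)}\otimes\omega_{(0)}$ of $(H,\alpha)$ on $(\Gamma,\gamma)$ with $\phi(\alpha(h)\cdot(\omega\cdot g))=\Delta(\alpha(h))(\phi(\omega)\Delta(g))$ and $\phi(dh)=h_1\otimes dh_2$ (componentwise products in $H\otimes\Gamma$). Set ${}^{coH}\Gamma:=\{\varrho\in\Gamma:\phi(\varrho)=1\otimes\gamma^{-1}(\varrho)\}$, $\omega_\Gamma(h):=S(h_1)\cdot dh_2$, $\omega_\Gamma(H)=\{\omega_\Gamma(h):h\in H\}$, $\mathcal{R}_\Gamma:=\{h\in\ker\varepsilon:\omega_\Gamma(h)=0\}$. The quantum Hom-tangent space is $\mathcal{T}_\Gamma:=\{X\in H':\ X(1)=0,\ X(h)=0\ \forall h\in\mathcal{R}_\Gamma\}$, where $H'$ is the linear dual of $H$. *)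

theory Defs
  imports Main "HOL.Vector_Spaces"
begin

text \<open>Elements of tensor products are represented by finite lists of pairs (triples)
of simple tensors; two such lists denote the same tensor iff every bilinear
(trilinear) k-valued form takes the same value on them (universal property).\<close>

definition bilin :: "('k::field \<Rightarrow> 'a::ab_group_add \<Rightarrow> 'a) \<Rightarrow> ('k \<Rightarrow> 'b::ab_group_add \<Rightarrow> 'b)
    \<Rightarrow> ('a \<Rightarrow> 'b \<Rightarrow> 'k) \<Rightarrow> bool" where
  "bilin s1 s2 f \<longleftrightarrow> (\<forall>x. Vector_Spaces.linear s2 times (f x)) \<and> (\<forall>y. Vector_Spaces.linear s1 times (\<lambda>x. f x y))"

definition trilin :: "('k::field \<Rightarrow> 'a::ab_group_add \<Rightarrow> 'a) \<Rightarrow> ('k \<Rightarrow> 'b::ab_group_add \<Rightarrow> 'b)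
    \<Rightarrow> ('k \<Rightarrow> 'c::ab_group_add \<Rightarrow> 'c) \<Rightarrow> ('a \<Rightarrow> 'b \<Rightarrow> 'c \<Rightarrow> 'k) \<Rightarrow> bool" where
  "trilin s1 s2 s3 f \<longleftrightarrow> (\<forall>x y. Vector_Spaces.linear s3 times (f x y)) \<and> (\<forall>x z. Vector_Spaces.linear s2 times (\<lambda>y. f x y z))
      \<and> (\<forall>y z. Vector_Spaces.linear s1 times (\<lambda>x. f x y z))"

definition eval2 :: "('a \<Rightarrow> 'b \<Rightarrow> 'k::comm_monoid_add) \<Rightarrow> ('a \<times> 'b) list \<Rightarrow> 'k" where
  "eval2 f xs = sum_list (map (\<lambda>(a, b). f a b) xs)"

definition eval3 :: "('a \<Rightarrow> 'b \<Rightarrow> 'c \<Rightarrow> 'k::comm_monoid_add) \<Rightarrow> ('a \<times> 'b \<times> 'c) list \<Rightarrow> 'k" where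
  "eval3 f xs = sum_list (map (\<lambda>(a, b, c). f a b c) xs)"

definition teq2 :: "('k::field \<Rightarrow> 'a::ab_group_add \<Rightarrow> 'a) \<Rightarrow> ('k \<Rightarrow> 'b::ab_group_add \<Rightarrow> 'b)
    \<Rightarrow> ('a \<times> 'b) list \<Rightarrow> ('a \<times> 'b) list \<Rightarrow> bool" where
  "teq2 s1 s2 xs ys \<longleftrightarrow> (\<forall>f. bilin s1 s2 f \<longrightarrow> eval2 f xs = eval2 f ys)"

definition teq3 :: "('k::field \<Rightarrow> 'a::ab_group_add \<Rightarrow> 'a) \<Rightarrow> ('k \<Rightarrow> 'b::ab_group_add \<Rightarrow> 'b)
    \<Rightarrow> ('k \<Rightarrow> 'c::ab_group_add \<Rightarrow> 'c)
    \<Rightarrow> ('a \<times> 'b \<times> 'c) list \<Rightarrow> ('a \<times> 'b \<times> 'c) list \<Rightarrow> bool" where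
  "teq3 s1 s2 s3 xs ys \<longleftrightarrow> (\<forall>f. trilin s1 s2 s3 f \<longrightarrow> eval3 f xs = eval3 f ys)"

definition tlinear :: "('k::field \<Rightarrow> 'v::ab_group_add \<Rightarrow> 'v) \<Rightarrow> ('k \<Rightarrow> 'a::ab_group_add \<Rightarrow> 'a)
    \<Rightarrow> ('k \<Rightarrow> 'b::ab_group_add \<Rightarrow> 'b) \<Rightarrow> ('v \<Rightarrow> ('a \<times> 'b) list) \<Rightarrow> bool" where
  "tlinear s s1 s2 D \<longleftrightarrow> (\<forall>f. bilin s1 s2 f \<longrightarrow> Vector_Spaces.linear s times (\<lambda>v. eval2 f (D v)))"

definition mon_hom_hopf :: "('k::field \<Rightarrow> 'h::ab_group_add \<Rightarrow> 'h) \<Rightarrow> ('h \<Rightarrow> 'h \<Rightarrow> 'h) \<Rightarrow> 'h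
    \<Rightarrow> ('h \<Rightarrow> 'h) \<Rightarrow> ('h \<Rightarrow> ('h \<times> 'h) list) \<Rightarrow> ('h \<Rightarrow> 'k) \<Rightarrow> ('h \<Rightarrow> 'h) \<Rightarrow> bool" where
  "mon_hom_hopf sH m u \<alpha> \<Delta> \<epsilon> S \<longleftrightarrow>
     vector_space sH \<and>
     (\<forall>a. Vector_Spaces.linear sH sH (m a)) \<and> (\<forall>b. Vector_Spaces.linear sH sH (\<lambda>a. m a b)) \<and>
     Vector_Spaces.linear sH sH \<alpha> \<and> bij \<alpha> \<and>
     (\<forall>a b. \<alpha> (m a b) = m (\<alpha> a) (\<alpha> b)) \<and> \<alpha> u = u \<and>
     (\<forall>a b c. m (\<alpha> a) (m b c) = m (m a b) (\<alpha> c)) \<and>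
     (\<forall>a. m u a = \<alpha> a \<and> m a u = \<alpha> a) \<and>
     tlinear sH sH sH \<Delta> \<and>
     (\<forall>a b. teq2 sH sH (\<Delta> (m a b)) [(m x y, m x' y'). (x, x') \<leftarrow> \<Delta> a, (y, y') \<leftarrow> \<Delta> b]) \<and>
     teq2 sH sH (\<Delta> u) [(u, u)] \<and>
     (\<forall>h. teq2 sH sH (\<Delta> (\<alpha> h)) (map (\<lambda>(x, y). (\<alpha> x, \<alpha> y)) (\<Delta> h))) \<and>
     (\<forall>h. teq3 sH sH sH
          [(inv \<alpha> x, y, z). (x, w) \<leftarrow> \<Delta> h, (y, z) \<leftarrow> \<Delta> w]
          [(y, z, inv \<alpha> x). (w, x) \<leftarrow> \<Delta> h, (y, z) \<leftarrow> \<Delta> w]) \<and>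
     Vector_Spaces.linear sH times \<epsilon> \<and> (\<forall>a b. \<epsilon> (m a b) = \<epsilon> a * \<epsilon> b) \<and> \<epsilon> u = 1 \<and>
     (\<forall>h. \<epsilon> (\<alpha> h) = \<epsilon> h) \<and>
     (\<forall>h. sum_list (map (\<lambda>(x, y). sH (\<epsilon> x) y) (\<Delta> h)) = inv \<alpha> h) \<and>
     (\<forall>h. sum_list (map (\<lambda>(x, y). sH (\<epsilon> y) x) (\<Delta> h)) = inv \<alpha> h) \<and>
     Vector_Spaces.linear sH sH S \<and> (\<forall>h. S (\<alpha> h) = \<alpha> (S h)) \<and>
     (\<forall>h. sum_list (map (\<lambda>(x, y). m (S x) y) (\<Delta> h)) = sH (\<epsilon> h) u) \<and>
     (\<forall>h. sum_list (map (\<lambda>(x, y). m x (S y)) (\<Delta> h)) = sH (\<epsilon> h) u) \<and>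
     bij S"

definition hom_bimodule :: "('k::field \<Rightarrow> 'h::ab_group_add \<Rightarrow> 'h) \<Rightarrow> ('h \<Rightarrow> 'h \<Rightarrow> 'h) \<Rightarrow> 'h
    \<Rightarrow> ('h \<Rightarrow> 'h) \<Rightarrow> ('k \<Rightarrow> 'g::ab_group_add \<Rightarrow> 'g) \<Rightarrow> ('g \<Rightarrow> 'g)
    \<Rightarrow> ('h \<Rightarrow> 'g \<Rightarrow> 'g) \<Rightarrow> ('g \<Rightarrow> 'h \<Rightarrow> 'g) \<Rightarrow> bool" where
  "hom_bimodule sH m u \<alpha> sG \<gamma> la ra \<longleftrightarrow>
     vector_space sG \<and> Vector_Spaces.linear sG sG \<gamma> \<and> bij \<gamma> \<and>
     (\<forall>a. Vector_Spaces.linear sG sG (la a)) \<and> (\<forall>v. Vector_Spaces.linear sH sG (\<lambda>a. la a v)) \<and>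
     (\<forall>v. Vector_Spaces.linear sH sG (ra v)) \<and> (\<forall>a. Vector_Spaces.linear sG sG (\<lambda>v. ra v a)) \<and>
     (\<forall>a v. \<gamma> (la a v) = la (\<alpha> a) (\<gamma> v)) \<and> (\<forall>a v. \<gamma> (ra v a) = ra (\<gamma> v) (\<alpha> a)) \<and>
     (\<forall>a b v. la (\<alpha> a) (la b v) = la (m a b) (\<gamma> v)) \<and> (\<forall>v. la u v = \<gamma> v) \<and>
     (\<forall>a b v. ra (ra v a) (\<alpha> b) = ra (\<gamma> v) (m a b)) \<and> (\<forall>v. ra v u = \<gamma> v) \<and>
     (\<forall>a b v. la (\<alpha> a) (ra v b) = ra (la a v) (\<alpha> b))"

definition hom_fodc :: "('k::field \<Rightarrow> 'h::ab_group_add \<Rightarrow> 'h) \<Rightarrow> ('h \<Rightarrow> 'h \<Rightarrow> 'h) \<Rightarrow> 'h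
    \<Rightarrow> ('h \<Rightarrow> 'h) \<Rightarrow> ('k \<Rightarrow> 'g::ab_group_add \<Rightarrow> 'g) \<Rightarrow> ('g \<Rightarrow> 'g)
    \<Rightarrow> ('h \<Rightarrow> 'g \<Rightarrow> 'g) \<Rightarrow> ('g \<Rightarrow> 'h \<Rightarrow> 'g) \<Rightarrow> ('h \<Rightarrow> 'g) \<Rightarrow> bool" where
  "hom_fodc sH m u \<alpha> sG \<gamma> la ra d \<longleftrightarrow>
     hom_bimodule sH m u \<alpha> sG \<gamma> la ra \<and> Vector_Spaces.linear sH sG d \<and>
     (\<forall>h g. d (m h g) = la h (d g) + ra (d h) g) \<and>
     (\<forall>h. d (\<alpha> h) = \<gamma> (d h)) \<and>
     (\<forall>w. w \<in> module.span sG {ra (la h (d g)) f | h g f. True})"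

definition hom_left_comodule :: "('k::field \<Rightarrow> 'h::ab_group_add \<Rightarrow> 'h)
    \<Rightarrow> ('h \<Rightarrow> 'h) \<Rightarrow> ('h \<Rightarrow> ('h \<times> 'h) list) \<Rightarrow> ('h \<Rightarrow> 'k)
    \<Rightarrow> ('k \<Rightarrow> 'g::ab_group_add \<Rightarrow> 'g) \<Rightarrow> ('g \<Rightarrow> 'g) \<Rightarrow> ('g \<Rightarrow> ('h \<times> 'g) list) \<Rightarrow> bool" where
  "hom_left_comodule sH \<alpha> \<Delta> \<epsilon> sG \<gamma> \<phi> \<longleftrightarrow>
     tlinear sG sH sG \<phi> \<and>
     (\<forall>v. teq2 sH sG (\<phi> (\<gamma> v)) (map (\<lambda>(x, w). (\<alpha> x, \<gamma> w)) (\<phi> v))) \<and>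
     (\<forall>v. teq3 sH sH sG
          [(inv \<alpha> x, y, w'). (x, w) \<leftarrow> \<phi> v, (y, w') \<leftarrow> \<phi> w]
          [(y, z, inv \<gamma> w). (x, w) \<leftarrow> \<phi> v, (y, z) \<leftarrow> \<Delta> x]) \<and>
     (\<forall>v. sum_list (map (\<lambda>(x, w). sG (\<epsilon> x) w) (\<phi> v)) = inv \<gamma> v)"

definition left_covariant :: "('k::field \<Rightarrow> 'h::ab_group_add \<Rightarrow> 'h) \<Rightarrow> ('h \<Rightarrow> 'h \<Rightarrow> 'h)
    \<Rightarrow> ('h \<Rightarrow> 'h) \<Rightarrow> ('h \<Rightarrow> ('h \<times> 'h) list) \<Rightarrow> ('h \<Rightarrow> 'k)
    \<Rightarrow> ('k \<Rightarrow> 'g::ab_group_add \<Rightarrow> 'g) \<Rightarrow> ('g \<Rightarrow> 'g)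
    \<Rightarrow> ('h \<Rightarrow> 'g \<Rightarrow> 'g) \<Rightarrow> ('g \<Rightarrow> 'h \<Rightarrow> 'g) \<Rightarrow> ('h \<Rightarrow> 'g) \<Rightarrow> ('g \<Rightarrow> ('h \<times> 'g) list) \<Rightarrow> bool" where
  "left_covariant sH m \<alpha> \<Delta> \<epsilon> sG \<gamma> la ra d \<phi> \<longleftrightarrow>
     hom_left_comodule sH \<alpha> \<Delta> \<epsilon> sG \<gamma> \<phi> \<and>
     (\<forall>h w g. teq2 sH sG (\<phi> (la (\<alpha> h) (ra w g)))
        [(m x (m y z), la x' (ra w' z')). (x, x') \<leftarrow> \<Delta> (\<alpha> h), (y, w') \<leftarrow> \<phi> w, (z, z') \<leftarrow> \<Delta> g]) \<and>
     (\<forall>h. teq2 sH sG (\<phi> (d h)) (map (\<lambda>(x, y). (x, d y)) (\<Delta> h)))"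

definition coinv :: "('k::field \<Rightarrow> 'h::ab_group_add \<Rightarrow> 'h) \<Rightarrow> 'h
    \<Rightarrow> ('k \<Rightarrow> 'g::ab_group_add \<Rightarrow> 'g) \<Rightarrow> ('g \<Rightarrow> 'g) \<Rightarrow> ('g \<Rightarrow> ('h \<times> 'g) list) \<Rightarrow> 'g set" where
  "coinv sH u sG \<gamma> \<phi> = {v. teq2 sH sG (\<phi> v) [(u, inv \<gamma> v)]}"

definition omegaG :: "('h \<Rightarrow> ('h \<times> 'h) list) \<Rightarrow> ('h \<Rightarrow> 'h) \<Rightarrow> ('h \<Rightarrow> 'g \<Rightarrow> 'g::ab_group_add)
    \<Rightarrow> ('h \<Rightarrow> 'g) \<Rightarrow> 'h \<Rightarrow> 'g" where
  "omegaG \<Delta> S la d h = sum_list (map (\<lambda>(x, y). la (S x) (d y)) (\<Delta> h))"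

definition RG :: "('h \<Rightarrow> ('h \<times> 'h) list) \<Rightarrow> ('h \<Rightarrow> 'k::zero) \<Rightarrow> ('h \<Rightarrow> 'h)
    \<Rightarrow> ('h \<Rightarrow> 'g \<Rightarrow> 'g::ab_group_add) \<Rightarrow> ('h \<Rightarrow> 'g) \<Rightarrow> 'h set" where
  "RG \<Delta> \<epsilon> S la d = {h. \<epsilon> h = 0 \<and> omegaG \<Delta> S la d h = 0}"

definition tangent :: "('k::field \<Rightarrow> 'h::ab_group_add \<Rightarrow> 'h) \<Rightarrow> 'h \<Rightarrow> ('h \<Rightarrow> ('h \<times> 'h) list)
    \<Rightarrow> ('h \<Rightarrow> 'k) \<Rightarrow> ('h \<Rightarrow> 'h) \<Rightarrow> ('h \<Rightarrow> 'g \<Rightarrow> 'g::ab_group_add) \<Rightarrow> ('h \<Rightarrow> 'g)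
    \<Rightarrow> ('h \<Rightarrow> 'k) set" where
  "tangent sH u \<Delta> \<epsilon> S la d =
     {X. Vector_Spaces.linear sH times X \<and> X u = 0 \<and> (\<forall>h \<in> RG \<Delta> \<epsilon> S la d. X h = 0)}"

definition good_form :: "('k::field \<Rightarrow> 'h::ab_group_add \<Rightarrow> 'h) \<Rightarrow> ('h \<Rightarrow> 'h) \<Rightarrow> ('h \<Rightarrow> 'k)
    \<Rightarrow> ('k \<Rightarrow> 'g::ab_group_add \<Rightarrow> 'g) \<Rightarrow> ('g \<Rightarrow> 'g) \<Rightarrow> ('h \<Rightarrow> 'g \<Rightarrow> 'g) \<Rightarrow> ('h \<Rightarrow> 'g)
    \<Rightarrow> ('h \<Rightarrow> 'k) set \<Rightarrow> (('h \<Rightarrow> 'k) \<Rightarrow> 'g \<Rightarrow> 'k) \<Rightarrow> bool" where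
  "good_form sH \<alpha> \<epsilon> sG \<gamma> la d T B \<longleftrightarrow>
     (\<forall>X \<in> T. Vector_Spaces.linear sG times (B X)) \<and>
     (\<forall>X \<in> T. \<forall>Y \<in> T. \<forall>v. B (\<lambda>h. X h + Y h) v = B X v + B Y v) \<and>
     (\<forall>X \<in> T. \<forall>c v. B (\<lambda>h. c * X h) v = c * B X v) \<and>
     (\<forall>X \<in> T. \<forall>v. B (X \<circ> inv \<alpha>) (\<gamma> v) = B X v) \<and>
     (\<forall>X \<in> T. \<forall>h g. B X (la h (d g)) = \<epsilon> h * X g)"

end

theory Submission
  imports Defs
begin

(* Let P(v) = S(v_(-1)) . v_(0). Left covariance gives P(h . dg) = \<epsilon>(h) \<omega>(\<alpha> g), using
   S(ab) = S(b) S(a), and P is the identity on coinvariants; conversely \<omega>(g) is coinvariant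
   because \<Delta>(S h) = S(h_2) \<otimes> S(h_1). Hence the coinvariants are exactly \<omega>(H) = P(\<Gamma>).

   For X in T_\<Gamma>, X(\<alpha>^-1 g) depends only on \<omega>(g), because two preimages differ by an
   element of k1 + R_\<Gamma>. So <X, v> := X(\<alpha>^-1 g) with \<omega>(g) = P(v) is well defined, and it is
   the only form with <X, h . dg> = \<epsilon>(h) X(g) since the h . dg span \<Gamma>. Nondegeneracy in X
   comes from \<omega> mapping onto the coinvariants, nondegeneracy in v from extending a functional
   that vanishes on k1 + R_\<Gamma>. *)

section \<open>Linear maps and separating functionals\<close>

abbreviation linear where "linear \<equiv> Vector_Spaces.linear"

lemma vector_space_field: "vector_space ((*) :: 'k::field \<Rightarrow> 'k \<Rightarrow> 'k)"
  by unfold_locales (auto simp: algebra_simps)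

lemmas linear_add = module_hom.add[OF linear.axioms(3)]
  and linear_scale = module_hom.scale[OF linear.axioms(3)]
  and linear_zero = module_hom.zero[OF linear.axioms(3)]
  and linear_diff = module_hom.diff[OF linear.axioms(3)]

lemma linear_comp: "linear s2 s3 g \<Longrightarrow> linear s1 s2 f \<Longrightarrow> linear s1 s3 (\<lambda>x. g (f x))"
  using Vector_Spaces.linear_compose[of s1 s2 f s3 g] by (simp add: o_def)

lemma linear_inv_bij:
  assumes f: "linear s s f" and bij: "bij f"
  shows "linear s s (inv f)"
proof -
  have f_inv: "f (inv f x) = x" and inv_f: "inv f (f x) = x" for x
    using bij by (simp_all add: bij_is_surj surj_f_inv_f bij_is_inj)
  show ?thesis unfolding linear_iff
  proof (intro conjI allI)
    show "vector_space s" "vector_space s" using f by (simp_all add: linear_iff)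
    fix x y
    show "inv f (x + y) = inv f x + inv f y"
      by (metis f_inv inv_f linear_add[OF f])
    fix c
    show "inv f (s c x) = s c (inv f x)"
      by (metis f_inv inv_f linear_scale[OF f])
  qed
qed

lemma exists_functional_separating:
  fixes s :: "'k::field \<Rightarrow> 'v::ab_group_add \<Rightarrow> 'v"
  assumes vs: "vector_space s" and z: "z \<notin> module.span s V"
  shows "\<exists>X. linear s (*) X \<and> X z = 1 \<and> (\<forall>y \<in> module.span s V. X y = 0)"
proof -
  interpret vs: vector_space s by fact
  interpret vp: vector_space_pair s "(*) :: 'k \<Rightarrow> 'k \<Rightarrow> 'k"
    using vs vector_space_field by (simp add: vector_space_pair_def)
  obtain B where B: "B \<subseteq> vs.span V" "vs.independent B" "vs.span V \<subseteq> vs.span B"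
    using vs.maximal_independent_subset[of "vs.span V"] by blast
  have "z \<notin> vs.span B"
    using z B(1) vs.span_minimal[of B "vs.span V"] by auto
  then have "vs.independent (insert z B)" by (rule vs.independent_insertI[OF _ B(2)])
  then obtain X where X: "linear s (*) X" "\<forall>x \<in> insert z B. X x = (if x = z then 1 else 0)"
    using vp.linear_independent_extend[of "insert z B" "\<lambda>x. if x = z then 1 else 0"] by blast
  have "z \<notin> B" using z B(1) by blast
  have "X y = 0" if "y \<in> vs.span B" for y
    by (rule module_hom.eq_0_on_span[OF linear.axioms(3)[OF X(1)] _ that]) (use X(2) \<open>z \<notin> B\<close> in auto)
  with B(3) X show ?thesis by auto
qed

lemma eq_if_functionals_eq:
  fixes s :: "'k::field \<Rightarrow> 'v::ab_group_add \<Rightarrow> 'v"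
  assumes vs: "vector_space s" and eq: "\<And>X. linear s (*) X \<Longrightarrow> X x = X y"
  shows "x = y"
proof (rule ccontr)
  interpret vs: vector_space s by fact
  assume "x \<noteq> y"
  then have "x - y \<notin> vs.span {}" by simp
  then obtain X where X: "linear s (*) X" "X (x - y) = 1"
    using exists_functional_separating[OF vs] by blast
  with eq[OF X(1)] show False by (simp add: linear_diff)
qed

lemma linear_ident: "vector_space s \<Longrightarrow> linear s s (\<lambda>x. x)"
  by (simp add: linear_iff)

lemma linear_add_fun: "linear s s' f \<Longrightarrow> linear s s' g \<Longrightarrow> linear s s' (\<lambda>x. f x + g x)"
  by (simp add: linear_iff vector_space.vector_space_assms(1))

lemma linear_mult_left_fun: "linear s (*) f \<Longrightarrow> linear s (*) (\<lambda>x. c * f x)"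
  by (simp add: linear_iff algebra_simps)

lemma linear_mult_right_fun: "linear s (*) f \<Longrightarrow> linear s (*) (\<lambda>x. f x * c)"
  by (simp add: linear_iff algebra_simps)

lemma linear_scale_fun: "vector_space s' \<Longrightarrow> linear s s' f \<Longrightarrow> linear s s' (\<lambda>x. s' c (f x))"
  by (simp add: linear_iff vector_space.vector_space_assms(1) vector_space.vector_space_assms(3)
      mult.commute)

lemma linear_scale_by_fun: "vector_space s' \<Longrightarrow> linear s (*) f \<Longrightarrow> linear s s' (\<lambda>x. s' (f x) c)"
  by (simp add: linear_iff vector_space.vector_space_assms(2) vector_space.vector_space_assms(3))

section \<open>Bilinear maps and tensors given by representatives\<close>

definition bilinear :: "('k::field \<Rightarrow> 'a::ab_group_add \<Rightarrow> 'a) \<Rightarrow> ('k \<Rightarrow> 'b::ab_group_add \<Rightarrow> 'b)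
    \<Rightarrow> ('k \<Rightarrow> 'c::ab_group_add \<Rightarrow> 'c) \<Rightarrow> ('a \<Rightarrow> 'b \<Rightarrow> 'c) \<Rightarrow> bool" where
  "bilinear s1 s2 s3 F \<longleftrightarrow> (\<forall>b. linear s1 s3 (\<lambda>a. F a b)) \<and> (\<forall>a. linear s2 s3 (F a))"

lemma bilinearI:
  "(\<And>b. linear s1 s3 (\<lambda>a. F a b)) \<Longrightarrow> (\<And>a. linear s2 s3 (\<lambda>b. F a b)) \<Longrightarrow> bilinear s1 s2 s3 F"
  by (auto simp: bilinear_def)

lemma bilinear_linear_left: "bilinear s1 s2 s3 F \<Longrightarrow> linear s1 s3 (\<lambda>a. F a b)"
  and bilinear_linear_right: "bilinear s1 s2 s3 F \<Longrightarrow> linear s2 s3 (\<lambda>b. F a b)"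
  by (auto simp: bilinear_def)

lemma bilin_iff_bilinear: "bilin s1 s2 F \<longleftrightarrow> bilinear s1 s2 (*) F"
  unfolding bilin_def bilinear_def by auto

lemma bilinear_scale_left: "bilinear s1 s2 s3 F \<Longrightarrow> F (s1 c x) y = s3 c (F x y)"
  and bilinear_scale_right: "bilinear s1 s2 s3 F \<Longrightarrow> F x (s2 c y) = s3 c (F x y)"
  using linear_scale[OF bilinear_linear_left] linear_scale[OF bilinear_linear_right] by fastforce+

lemma linear_comp_bilinear_left: "bilinear s1 s2 s3 F \<Longrightarrow> linear s s1 f \<Longrightarrow> linear s s3 (\<lambda>x. F (f x) b)"
  and linear_comp_bilinear_right: "bilinear s1 s2 s3 F \<Longrightarrow> linear s s2 g \<Longrightarrow> linear s s3 (\<lambda>x. F a (g x))"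
  by (auto intro: linear_comp bilinear_linear_left bilinear_linear_right)

lemma eval2_Nil [simp]: "eval2 F [] = 0"
  and eval2_single [simp]: "eval2 F [(a, b)] = F a b"
  and eval2_Cons: "eval2 F ((a, b) # xs) = F a b + eval2 F xs"
  by (simp_all add: eval2_def)

lemma eval2_append [simp]: "eval2 F (xs @ ys) = eval2 F xs + eval2 F ys"
  by (simp add: eval2_def)

lemma eval2_concat [simp]:
  "eval2 F (concat (map (\<lambda>(x, y). L x y) xs)) = eval2 (\<lambda>x y. eval2 F (L x y)) xs"
  by (induct xs) (auto simp: eval2_def)

lemma eval2_map [simp]:
  "eval2 F (map (\<lambda>(x, y). (A x y, B x y)) xs) = eval2 (\<lambda>x y. F (A x y) (B x y)) xs"
  by (induct xs) (auto simp: eval2_def)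

lemma eval2_zero [simp]: "eval2 (\<lambda>a b. 0) xs = 0"
  by (induct xs) (auto simp: eval2_def)

lemma eval3_concat [simp]:
  "eval3 K (concat (map (\<lambda>(x, y). L x y) xs)) = eval2 (\<lambda>x y. eval3 K (L x y)) xs"
  by (induct xs) (auto simp: eval2_def eval3_def)

lemma eval3_map [simp]:
  "eval3 K (map (\<lambda>(x, y). (A x y, B x y, C x y)) xs) = eval2 (\<lambda>x y. K (A x y) (B x y) (C x y)) xs"
  by (induct xs) (auto simp: eval2_def eval3_def)

lemma eval3_map_Pair [simp]: "eval3 K (map (Pair a) ys) = eval2 (K a) ys"
  by (induct ys) (auto simp: eval2_def eval3_def)

lemma eval2_add: "eval2 (\<lambda>a b. F a b + G a b) xs = eval2 F xs + eval2 G xs"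
  by (induct xs) (auto simp: eval2_def ac_simps)

lemma eval2_mult: "eval2 (\<lambda>a b. (c::'a::semiring_0) * G a b) xs = c * eval2 G xs"
  by (induct xs) (auto simp: eval2_def algebra_simps)

lemma eval2_linear: "linear s1 s2 f \<Longrightarrow> f (eval2 F xs) = eval2 (\<lambda>a b. f (F a b)) xs"
  by (induct xs) (auto simp: eval2_def linear_zero linear_add)

lemma eval3_linear: "linear s1 s2 f \<Longrightarrow> f (eval3 K xs) = eval3 (\<lambda>a b c. f (K a b c)) xs"
  by (induct xs) (auto simp: eval3_def linear_zero linear_add)

lemma eval2_swap:
  "eval2 (\<lambda>a b. eval2 (\<lambda>c e. F a b c e) ys) xs = eval2 (\<lambda>c e. eval2 (\<lambda>a b. F a b c e) xs) ys"
  by (induct xs) (auto simp: eval2_Cons eval2_add)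

lemma linear_eval2_fun:
  assumes "vector_space s" "vector_space s'" "\<And>a b. linear s s' (G a b)"
  shows "linear s s' (\<lambda>x. eval2 (\<lambda>a b. G a b x) xs)"
proof -
  interpret s': vector_space s' by fact
  show ?thesis using assms(3)
    by (induct xs) (auto simp: eval2_Cons linear_iff assms s'.scale_right_distrib)
qed

lemma teq2_bilinearI:
  "(\<And>F. bilinear s1 s2 (*) F \<Longrightarrow> eval2 F xs = eval2 F ys) \<Longrightarrow> teq2 s1 s2 xs ys"
  unfolding teq2_def bilin_iff_bilinear by blast

text \<open>The defining test of teq2 uses scalar bilinear forms only; composing with all functionals
  of the target extends it to bilinear maps with values in any vector space.\<close>

lemma teq2_eval2_eq:
  assumes eq: "teq2 s1 s2 xs ys" and vs: "vector_space s3" and F: "bilinear s1 s2 s3 F"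
  shows "eval2 F xs = eval2 F ys"
proof (rule eq_if_functionals_eq[OF vs])
  fix X assume X: "linear s3 (*) X"
  have "bilin s1 s2 (\<lambda>a b. X (F a b))"
    unfolding bilin_iff_bilinear
    by (intro bilinearI linear_comp[OF X] bilinear_linear_left[OF F] bilinear_linear_right[OF F])
  with eq show "X (eval2 F xs) = X (eval2 F ys)"
    unfolding teq2_def by (simp add: eval2_linear[OF X])
qed

lemma teq3_eval3_eq:
  assumes eq: "teq3 s1 s2 s3 xs ys" and vs: "vector_space s4"
    and K1: "\<And>b c. linear s1 s4 (\<lambda>a. K a b c)" and K2: "\<And>a c. linear s2 s4 (\<lambda>b. K a b c)"
    and K3: "\<And>a b. linear s3 s4 (\<lambda>c. K a b c)"
  shows "eval3 K xs = eval3 K ys"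
proof (rule eq_if_functionals_eq[OF vs])
  fix X assume X: "linear s4 (*) X"
  have "trilin s1 s2 s3 (\<lambda>a b c. X (K a b c))"
    unfolding trilin_def using linear_comp[OF X K1] linear_comp[OF X K2] linear_comp[OF X K3] by auto
  with eq show "X (eval3 K xs) = X (eval3 K ys)"
    unfolding teq3_def by (simp add: eval3_linear[OF X])
qed

lemma tlinear_linear:
  assumes D: "tlinear s s1 s2 D" and vs: "vector_space s" and vs3: "vector_space s3"
    and F: "bilinear s1 s2 s3 F"
  shows "linear s s3 (\<lambda>x. eval2 F (D x))"
proof -
  have functional: "linear s (*) (\<lambda>x. X (eval2 F (D x)))" if X: "linear s3 (*) X" for X
  proof -
    have "bilin s1 s2 (\<lambda>a b. X (F a b))"
      unfolding bilin_iff_bilinear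
      by (intro bilinearI linear_comp[OF X] bilinear_linear_left[OF F] bilinear_linear_right[OF F])
    with D show ?thesis unfolding tlinear_def by (simp add: eval2_linear[OF X])
  qed
  show ?thesis unfolding linear_iff
  proof (intro conjI allI vs vs3)
    fix x y show "eval2 F (D (x + y)) = eval2 F (D x) + eval2 F (D y)"
      by (rule eq_if_functionals_eq[OF vs3]) (simp add: functional[THEN linear_add] linear_add)
  next
    fix c x show "eval2 F (D (s c x)) = s3 c (eval2 F (D x))"
      by (rule eq_if_functionals_eq[OF vs3]) (simp add: functional[THEN linear_scale] linear_scale)
  qed
qed

section \<open>Monoidal Hom-Hopf algebras\<close>

locale hom_hopf_algebra =
  fixes sH :: "'k::field \<Rightarrow> 'h::ab_group_add \<Rightarrow> 'h"
    and m :: "'h \<Rightarrow> 'h \<Rightarrow> 'h" and u :: 'h and \<alpha> :: "'h \<Rightarrow> 'h"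
    and \<Delta> :: "'h \<Rightarrow> ('h \<times> 'h) list" and \<epsilon> :: "'h \<Rightarrow> 'k" and S :: "'h \<Rightarrow> 'h"
  assumes hopf: "mon_hom_hopf sH m u \<alpha> \<Delta> \<epsilon> S"
begin

lemma vector_space_H: "vector_space sH"
  and mult_linear_right: "\<And>a. linear sH sH (m a)"
  and mult_linear_left: "\<And>b. linear sH sH (\<lambda>a. m a b)"
  and \<alpha>_linear: "linear sH sH \<alpha>" and \<alpha>_bij: "bij \<alpha>"
  and \<alpha>_mult: "\<And>a b. \<alpha> (m a b) = m (\<alpha> a) (\<alpha> b)" and \<alpha>_unit: "\<alpha> u = u"
  and hom_assoc: "\<And>a b c. m (\<alpha> a) (m b c) = m (m a b) (\<alpha> c)"
  and unit_left: "\<And>a. m u a = \<alpha> a" and unit_right: "\<And>a. m a u = \<alpha> a"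
  and \<Delta>_tlinear: "tlinear sH sH sH \<Delta>"
  and \<Delta>_mult: "\<And>a b. teq2 sH sH (\<Delta> (m a b)) [(m x y, m x' y'). (x, x') \<leftarrow> \<Delta> a, (y, y') \<leftarrow> \<Delta> b]"
  and \<Delta>_unit: "teq2 sH sH (\<Delta> u) [(u, u)]"
  and \<Delta>_\<alpha>: "\<And>h. teq2 sH sH (\<Delta> (\<alpha> h)) (map (\<lambda>(x, y). (\<alpha> x, \<alpha> y)) (\<Delta> h))"
  and \<Delta>_coassoc: "\<And>h. teq3 sH sH sH
          [(inv \<alpha> x, y, z). (x, w) \<leftarrow> \<Delta> h, (y, z) \<leftarrow> \<Delta> w]
          [(y, z, inv \<alpha> x). (w, x) \<leftarrow> \<Delta> h, (y, z) \<leftarrow> \<Delta> w]"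
  and \<epsilon>_linear: "linear sH (*) \<epsilon>" and \<epsilon>_mult: "\<And>a b. \<epsilon> (m a b) = \<epsilon> a * \<epsilon> b"
  and \<epsilon>_unit: "\<epsilon> u = 1" and \<epsilon>_\<alpha>: "\<And>h. \<epsilon> (\<alpha> h) = \<epsilon> h"
  and counit_left: "\<And>h. eval2 (\<lambda>x y. sH (\<epsilon> x) y) (\<Delta> h) = inv \<alpha> h"
  and counit_right: "\<And>h. eval2 (\<lambda>x y. sH (\<epsilon> y) x) (\<Delta> h) = inv \<alpha> h"
  and S_linear: "linear sH sH S" and S_\<alpha>: "\<And>h. S (\<alpha> h) = \<alpha> (S h)"
  and antipode_left: "\<And>h. eval2 (\<lambda>x y. m (S x) y) (\<Delta> h) = sH (\<epsilon> h) u"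
  and antipode_right: "\<And>h. eval2 (\<lambda>x y. m x (S y)) (\<Delta> h) = sH (\<epsilon> h) u"
  using hopf unfolding mon_hom_hopf_def eval2_def by auto

lemma inv_\<alpha>_linear: "linear sH sH (inv \<alpha>)"
  by (rule linear_inv_bij[OF \<alpha>_linear \<alpha>_bij])

lemma \<alpha>_inv_\<alpha> [simp]: "\<alpha> (inv \<alpha> x) = x"
  and inv_\<alpha>_\<alpha> [simp]: "inv \<alpha> (\<alpha> x) = x"
  by (simp_all add: \<alpha>_bij bij_is_surj surj_f_inv_f bij_is_inj)

lemma inv_\<alpha>_mult: "inv \<alpha> (m a b) = m (inv \<alpha> a) (inv \<alpha> b)"
  by (metis \<alpha>_inv_\<alpha> \<alpha>_mult inv_\<alpha>_\<alpha>)

lemma inv_\<alpha>_unit [simp]: "inv \<alpha> u = u"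
  by (metis \<alpha>_unit inv_\<alpha>_\<alpha>)

lemma \<epsilon>_inv_\<alpha> [simp]: "\<epsilon> (inv \<alpha> h) = \<epsilon> h"
  by (metis \<alpha>_inv_\<alpha> \<epsilon>_\<alpha>)

lemma S_inv_\<alpha>: "S (inv \<alpha> h) = inv \<alpha> (S h)"
  by (metis \<alpha>_inv_\<alpha> S_\<alpha> inv_\<alpha>_\<alpha>)

lemma mult_hom_assoc: "m (m a b) c = m (\<alpha> a) (m b (inv \<alpha> c))"
  using hom_assoc[of a b "inv \<alpha> c"] by simp

lemma scale_H_scale_H: "sH a (sH b x) = sH (a * b) x"
  using vector_space_H by (simp add: vector_space.vector_space_assms(3))

lemma mult_scale_left: "m (sH c x) y = sH c (m x y)"
  and mult_scale_right: "m x (sH c y) = sH c (m x y)"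
  and \<alpha>_scale: "\<alpha> (sH c x) = sH c (\<alpha> x)"
  and inv_\<alpha>_scale: "inv \<alpha> (sH c x) = sH c (inv \<alpha> x)"
  using linear_scale[OF mult_linear_left] linear_scale[OF mult_linear_right]
    linear_scale[OF \<alpha>_linear] linear_scale[OF inv_\<alpha>_linear] by fastforce+

lemma linear_comp_\<alpha>: "linear s sH f \<Longrightarrow> linear s sH (\<lambda>x. \<alpha> (f x))"
  by (rule linear_comp[OF \<alpha>_linear])

lemma linear_comp_inv_\<alpha>: "linear s sH f \<Longrightarrow> linear s sH (\<lambda>x. inv \<alpha> (f x))"
  by (rule linear_comp[OF inv_\<alpha>_linear])

lemma linear_comp_S: "linear s sH f \<Longrightarrow> linear s sH (\<lambda>x. S (f x))"
  by (rule linear_comp[OF S_linear])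

lemma linear_comp_mult_left: "linear s sH f \<Longrightarrow> linear s sH (\<lambda>x. m (f x) c)"
  by (rule linear_comp[OF mult_linear_left])

lemma linear_comp_mult_right: "linear s sH f \<Longrightarrow> linear s sH (\<lambda>x. m c (f x))"
  by (rule linear_comp[OF mult_linear_right])

lemma linear_comp_\<epsilon>: "linear s sH f \<Longrightarrow> linear s (*) (\<lambda>x. \<epsilon> (f x))"
  by (rule linear_comp[OF \<epsilon>_linear])

lemma linear_comp_\<Delta>:
  "vector_space s' \<Longrightarrow> linear s sH f \<Longrightarrow> bilinear sH sH s' F \<Longrightarrow> linear s s' (\<lambda>x. eval2 F (\<Delta> (f x)))"
  by (rule linear_comp[of sH s' "\<lambda>x. eval2 F (\<Delta> x)"]) (rule tlinear_linear[OF \<Delta>_tlinear vector_space_H])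

lemmas hopf_linear_intros = linear_ident linear_add_fun linear_mult_left_fun linear_mult_right_fun
  linear_scale_fun[OF vector_space_H] linear_scale_by_fun[OF vector_space_H] linear_eval2_fun
  linear_comp_\<alpha> linear_comp_inv_\<alpha> linear_comp_S linear_comp_mult_left linear_comp_mult_right
  linear_comp_\<epsilon> linear_comp_\<Delta> bilinearI vector_space_H vector_space_field

lemma scale_H_linear: "linear sH sH (sH c)"
  using linear_scale_fun[OF vector_space_H linear_ident[OF vector_space_H]] by simp

lemma antipode_left_linear:
  assumes L: "linear sH s' L" shows "eval2 (\<lambda>x y. L (m (S x) y)) (\<Delta> h) = s' (\<epsilon> h) (L u)"
  using eval2_linear[OF L, of "\<lambda>x y. m (S x) y" "\<Delta> h"] by (simp add: antipode_left linear_scale[OF L])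

lemma antipode_right_linear:
  assumes L: "linear sH s' L" shows "eval2 (\<lambda>x y. L (m x (S y))) (\<Delta> h) = s' (\<epsilon> h) (L u)"
  using eval2_linear[OF L, of "\<lambda>x y. m x (S y)" "\<Delta> h"] by (simp add: antipode_right linear_scale[OF L])

lemma counit_left_linear:
  assumes L: "linear sH s' L" shows "eval2 (\<lambda>x y. s' (\<epsilon> x) (L y)) (\<Delta> h) = L (inv \<alpha> h)"
  using eval2_linear[OF L, of "\<lambda>x y. sH (\<epsilon> x) y" "\<Delta> h"] by (simp add: counit_left linear_scale[OF L])

lemma \<Delta>_\<alpha>_eval2:
  "vector_space s' \<Longrightarrow> bilinear sH sH s' F \<Longrightarrow> eval2 F (\<Delta> (\<alpha> h)) = eval2 (\<lambda>x y. F (\<alpha> x) (\<alpha> y)) (\<Delta> h)"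
  using teq2_eval2_eq[OF \<Delta>_\<alpha>] by simp

lemma \<Delta>_inv_\<alpha>_eval2:
  assumes vs: "vector_space s'" and F: "bilinear sH sH s' F"
  shows "eval2 F (\<Delta> (inv \<alpha> h)) = eval2 (\<lambda>x y. F (inv \<alpha> x) (inv \<alpha> y)) (\<Delta> h)"
proof -
  have "bilinear sH sH s' (\<lambda>x y. F (inv \<alpha> x) (inv \<alpha> y))"
    by (intro hopf_linear_intros linear_comp_bilinear_left[OF F] linear_comp_bilinear_right[OF F])
  from \<Delta>_\<alpha>_eval2[OF vs this, of "inv \<alpha> h"] show ?thesis by simp
qed

lemma \<Delta>_unit_eval2: "vector_space s' \<Longrightarrow> bilinear sH sH s' F \<Longrightarrow> eval2 F (\<Delta> u) = F u u"
  using teq2_eval2_eq[OF \<Delta>_unit] by simp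

lemma \<Delta>_coassoc_eval2:
  assumes "vector_space s'" "\<And>b c. linear sH s' (\<lambda>a. K a b c)"
    "\<And>a c. linear sH s' (\<lambda>b. K a b c)" "\<And>a b. linear sH s' (\<lambda>c. K a b c)"
  shows "eval2 (\<lambda>w x. eval2 (\<lambda>y z. K y z (inv \<alpha> x)) (\<Delta> w)) (\<Delta> h)
    = eval2 (\<lambda>x w. eval2 (\<lambda>y z. K (inv \<alpha> x) y z) (\<Delta> w)) (\<Delta> h)"
  using teq3_eval3_eq[OF \<Delta>_coassoc assms] by simp

section \<open>The antipode reverses products and coproducts\<close>

text \<open>S(ab) = S(b)S(a) follows because S \<circ> m is a left and (a, b) \<mapsto> S(b)S(a) a right
  convolution inverse of m.\<close>

definition mconv :: "('h \<Rightarrow> 'h \<Rightarrow> 'h) \<Rightarrow> ('h \<Rightarrow> 'h \<Rightarrow> 'h) \<Rightarrow> 'h \<Rightarrow> 'h \<Rightarrow> 'h" where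
  "mconv f g a b = eval2 (\<lambda>a1 a2. eval2 (\<lambda>b1 b2. m (f a1 b1) (g a2 b2)) (\<Delta> b)) (\<Delta> a)"

definition mconv_unit :: "'h \<Rightarrow> 'h \<Rightarrow> 'h" where
  "mconv_unit a b = sH (\<epsilon> a * \<epsilon> b) u"

definition hom_bilinear :: "('h \<Rightarrow> 'h \<Rightarrow> 'h) \<Rightarrow> bool" where
  "hom_bilinear f \<longleftrightarrow> bilinear sH sH sH f \<and> (\<forall>a b. f (\<alpha> a) (\<alpha> b) = \<alpha> (f a b))"

lemma hom_bilinear_inv_\<alpha>: "hom_bilinear f \<Longrightarrow> inv \<alpha> (f a b) = f (inv \<alpha> a) (inv \<alpha> b)"
  unfolding hom_bilinear_def by (metis \<alpha>_inv_\<alpha> inv_\<alpha>_\<alpha>)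

lemma mconv_assoc:
  assumes f: "hom_bilinear f" and g: "hom_bilinear g" and h: "hom_bilinear h"
  shows "mconv (mconv f g) h a b = mconv f (mconv g h) a b"
proof -
  have bf: "bilinear sH sH sH f" and bg: "bilinear sH sH sH g" and bh: "bilinear sH sH sH h"
    and f_\<alpha>: "\<And>x y. \<alpha> (f x y) = f (\<alpha> x) (\<alpha> y)"
    using f g h by (auto simp: hom_bilinear_def)
  note intros = hopf_linear_intros linear_comp_bilinear_left[OF bf] linear_comp_bilinear_right[OF bf]
    linear_comp_bilinear_left[OF bg] linear_comp_bilinear_right[OF bg]
    linear_comp_bilinear_left[OF bh] linear_comp_bilinear_right[OF bh]
  have "mconv (mconv f g) h a b = eval2 (\<lambda>a1 a2. eval2 (\<lambda>b1 b2. eval2 (\<lambda>p q. eval2 (\<lambda>r t.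
      m (f (\<alpha> p) (\<alpha> r)) (m (g q t) (h (inv \<alpha> a2) (inv \<alpha> b2)))) (\<Delta> b1)) (\<Delta> a1)) (\<Delta> b)) (\<Delta> a)"
    unfolding mconv_def
    by (simp add: eval2_linear[OF mult_linear_left] mult_hom_assoc f_\<alpha> hom_bilinear_inv_\<alpha>[OF h])
  also have "\<dots> = eval2 (\<lambda>a1 a2. eval2 (\<lambda>p q. eval2 (\<lambda>b1 b2. eval2 (\<lambda>r t.
      m (f (\<alpha> p) (\<alpha> r)) (m (g q t) (h (inv \<alpha> a2) (inv \<alpha> b2)))) (\<Delta> b1)) (\<Delta> b)) (\<Delta> a1)) (\<Delta> a)"
    by (simp add: eval2_swap[where ys="\<Delta> b"])
  also have "\<dots> = eval2 (\<lambda>x w. eval2 (\<lambda>y z. eval2 (\<lambda>b1 b2. eval2 (\<lambda>r t.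
      m (f (\<alpha> (inv \<alpha> x)) (\<alpha> r)) (m (g y t) (h z (inv \<alpha> b2)))) (\<Delta> b1)) (\<Delta> b)) (\<Delta> w)) (\<Delta> a)"
    by (rule \<Delta>_coassoc_eval2[of sH "\<lambda>p q z. eval2 (\<lambda>b1 b2. eval2 (\<lambda>r t.
      m (f (\<alpha> p) (\<alpha> r)) (m (g q t) (h z (inv \<alpha> b2)))) (\<Delta> b1)) (\<Delta> b)" a]) (intro intros)+
  also have "\<dots> = eval2 (\<lambda>x w. eval2 (\<lambda>y z. eval2 (\<lambda>b1 b2. eval2 (\<lambda>r t.
      m (f x (\<alpha> r)) (m (g y t) (h z (inv \<alpha> b2)))) (\<Delta> b1)) (\<Delta> b)) (\<Delta> w)) (\<Delta> a)"
    by simp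
  also have "\<dots> = eval2 (\<lambda>x w. eval2 (\<lambda>y z. eval2 (\<lambda>x' w'. eval2 (\<lambda>y' z'.
      m (f x x') (m (g y y') (h z z'))) (\<Delta> w')) (\<Delta> b)) (\<Delta> w)) (\<Delta> a)"
  proof -
    have "eval2 (\<lambda>b1 b2. eval2 (\<lambda>r t. m (f x (\<alpha> r)) (m (g y t) (h z (inv \<alpha> b2)))) (\<Delta> b1)) (\<Delta> b) =
          eval2 (\<lambda>x' w'. eval2 (\<lambda>y' z'. m (f x (\<alpha> (inv \<alpha> x'))) (m (g y y') (h z z'))) (\<Delta> w')) (\<Delta> b)" for x y z
      by (rule \<Delta>_coassoc_eval2[of sH "\<lambda>r t z'. m (f x (\<alpha> r)) (m (g y t) (h z z'))" b]) (intro intros)+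
    then show ?thesis by simp
  qed
  also have "\<dots> = mconv f (mconv g h) a b"
    unfolding mconv_def
    by (simp add: eval2_linear[OF mult_linear_right] eval2_swap[where ys="\<Delta> b"])
  finally show ?thesis .
qed

lemma mconv_unit_right:
  assumes f: "hom_bilinear f" shows "mconv f mconv_unit a b = f a b"
proof -
  have bf: "bilinear sH sH sH f" and f_\<alpha>: "\<And>x y. \<alpha> (f x y) = f (\<alpha> x) (\<alpha> y)"
    using f by (auto simp: hom_bilinear_def)
  have "f a b = \<alpha> (f (inv \<alpha> a) (inv \<alpha> b))" by (simp add: f_\<alpha>)
  also have "\<dots> = \<alpha> (f (eval2 (\<lambda>x y. sH (\<epsilon> y) x) (\<Delta> a)) (eval2 (\<lambda>x y. sH (\<epsilon> y) x) (\<Delta> b)))"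
    by (simp add: counit_right)
  also have "\<dots> = mconv f mconv_unit a b"
    unfolding mconv_def mconv_unit_def
    by (simp add: eval2_linear[OF bilinear_linear_left[OF bf]] eval2_linear[OF bilinear_linear_right[OF bf]]
        eval2_linear[OF \<alpha>_linear] eval2_linear[OF scale_H_linear] bilinear_scale_left[OF bf]
        bilinear_scale_right[OF bf] \<alpha>_scale mult_scale_right unit_right scale_H_scale_H mult.commute
        eval2_swap[where ys="\<Delta> a"])
  finally show ?thesis ..
qed

lemma mconv_unit_left:
  assumes f: "hom_bilinear f" shows "mconv mconv_unit f a b = f a b"
proof -
  have bf: "bilinear sH sH sH f" and f_\<alpha>: "\<And>x y. \<alpha> (f x y) = f (\<alpha> x) (\<alpha> y)"
    using f by (auto simp: hom_bilinear_def)
  have "f a b = \<alpha> (f (inv \<alpha> a) (inv \<alpha> b))" by (simp add: f_\<alpha>)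
  also have "\<dots> = \<alpha> (f (eval2 (\<lambda>x y. sH (\<epsilon> x) y) (\<Delta> a)) (eval2 (\<lambda>x y. sH (\<epsilon> x) y) (\<Delta> b)))"
    by (simp add: counit_left)
  also have "\<dots> = mconv mconv_unit f a b"
    unfolding mconv_def mconv_unit_def
    by (simp add: eval2_linear[OF bilinear_linear_left[OF bf]] eval2_linear[OF bilinear_linear_right[OF bf]]
        eval2_linear[OF \<alpha>_linear] eval2_linear[OF scale_H_linear] bilinear_scale_left[OF bf]
        bilinear_scale_right[OF bf] \<alpha>_scale mult_scale_left unit_left scale_H_scale_H mult.commute
        eval2_swap[where ys="\<Delta> a"])
  finally show ?thesis ..
qed

lemma mconv_S_mult_mult: "mconv (\<lambda>a b. S (m a b)) m a b = mconv_unit a b"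
proof -
  have "mconv (\<lambda>a b. S (m a b)) m a b
      = eval2 (\<lambda>x y. m (S x) y) [(m x y, m x' y'). (x, x') \<leftarrow> \<Delta> a, (y, y') \<leftarrow> \<Delta> b]"
    unfolding mconv_def by simp
  also have "\<dots> = eval2 (\<lambda>x y. m (S x) y) (\<Delta> (m a b))"
    by (rule teq2_eval2_eq[OF \<Delta>_mult vector_space_H, symmetric]) (intro hopf_linear_intros)+
  also have "\<dots> = mconv_unit a b" by (simp add: antipode_left mconv_unit_def \<epsilon>_mult)
  finally show ?thesis .
qed

lemma mult_mult_hom_assoc: "m (m a b) (m c e) = m (\<alpha> a) (m (inv \<alpha> (m b c)) e)"
proof -
  have "m (m a b) (m c e) = m (\<alpha> a) (m b (m (inv \<alpha> c) (inv \<alpha> e)))"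
    by (simp add: mult_hom_assoc inv_\<alpha>_mult)
  also have "\<dots> = m (\<alpha> a) (m (inv \<alpha> (m b c)) e)"
    using hom_assoc[of "inv \<alpha> b" "inv \<alpha> c" "inv \<alpha> e"] by (simp add: inv_\<alpha>_mult)
  finally show ?thesis .
qed

lemma mconv_mult_S_flip: "mconv m (\<lambda>a b. m (S b) (S a)) a b = mconv_unit a b"
proof -
  have "mconv m (\<lambda>a b. m (S b) (S a)) a b =
     eval2 (\<lambda>a1 a2. eval2 (\<lambda>b1 b2. m (\<alpha> a1) (m (inv \<alpha> (m b1 (S b2))) (S a2))) (\<Delta> b)) (\<Delta> a)"
    unfolding mconv_def by (simp add: mult_mult_hom_assoc)
  also have "\<dots> = eval2 (\<lambda>a1 a2. m (\<alpha> a1) (m (inv \<alpha> (eval2 (\<lambda>b1 b2. m b1 (S b2)) (\<Delta> b))) (S a2))) (\<Delta> a)"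
    by (simp add: eval2_linear[OF mult_linear_left] eval2_linear[OF mult_linear_right]
        eval2_linear[OF inv_\<alpha>_linear])
  also have "\<dots> = eval2 (\<lambda>a1 a2. sH (\<epsilon> b) (\<alpha> (m a1 (S a2)))) (\<Delta> a)"
    by (simp add: antipode_right inv_\<alpha>_scale mult_scale_left mult_scale_right unit_left \<alpha>_mult)
  also have "\<dots> = sH (\<epsilon> b) (\<alpha> (eval2 (\<lambda>a1 a2. m a1 (S a2)) (\<Delta> a)))"
    by (simp add: eval2_linear[OF scale_H_linear] eval2_linear[OF \<alpha>_linear])
  also have "\<dots> = mconv_unit a b"
    by (simp add: antipode_right mconv_unit_def \<alpha>_scale \<alpha>_unit scale_H_scale_H mult.commute)
  finally show ?thesis .
qed

lemma hom_bilinear_mult: "hom_bilinear m"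
  unfolding hom_bilinear_def by (auto intro!: bilinearI mult_linear_left mult_linear_right simp: \<alpha>_mult)

lemma hom_bilinear_S_mult: "hom_bilinear (\<lambda>a b. S (m a b))"
  unfolding hom_bilinear_def by (auto intro!: hopf_linear_intros simp: \<alpha>_mult[symmetric] S_\<alpha>)

lemma hom_bilinear_S_flip: "hom_bilinear (\<lambda>a b. m (S b) (S a))"
  unfolding hom_bilinear_def by (auto intro!: hopf_linear_intros simp: \<alpha>_mult S_\<alpha>)

lemma S_mult: "S (m a b) = m (S b) (S a)"
proof -
  have right_inv: "mconv m (\<lambda>a b. m (S b) (S a)) = mconv_unit"
    and left_inv: "mconv (\<lambda>a b. S (m a b)) m = mconv_unit"
    by (intro ext mconv_mult_S_flip mconv_S_mult_mult)+
  have "S (m a b) = mconv (\<lambda>a b. S (m a b)) (mconv m (\<lambda>a b. m (S b) (S a))) a b"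
    by (simp add: right_inv mconv_unit_right[OF hom_bilinear_S_mult])
  also have "\<dots> = mconv (mconv (\<lambda>a b. S (m a b)) m) (\<lambda>a b. m (S b) (S a)) a b"
    by (rule mconv_assoc[OF hom_bilinear_S_mult hom_bilinear_mult hom_bilinear_S_flip, symmetric])
  also have "\<dots> = m (S b) (S a)"
    by (simp add: left_inv mconv_unit_left[OF hom_bilinear_S_flip])
  finally show ?thesis .
qed

text \<open>Convolution of maps H \<rightarrow> H \<otimes> H with values in the algebra H \<otimes> H, up to equality
  of tensors. \<Delta> \<circ> S and (S \<otimes> S) \<circ> flip \<circ> \<Delta> are a left and a right convolution inverse of \<Delta>.\<close>

definition cconv :: "('h \<Rightarrow> ('h \<times> 'h) list) \<Rightarrow> ('h \<Rightarrow> ('h \<times> 'h) list) \<Rightarrow> 'h \<Rightarrow> ('h \<times> 'h) list" where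
  "cconv f g c = concat (map (\<lambda>(c1, c2). concat (map (\<lambda>(x, y).
      map (\<lambda>(x', y'). (m x x', m y y')) (g c2)) (f c1))) (\<Delta> c))"

definition cconv_unit :: "'h \<Rightarrow> ('h \<times> 'h) list" where
  "cconv_unit c = [(sH (\<epsilon> c) u, u)]"

definition teq_fun :: "('h \<Rightarrow> ('h \<times> 'h) list) \<Rightarrow> ('h \<Rightarrow> ('h \<times> 'h) list) \<Rightarrow> bool" where
  "teq_fun f g \<longleftrightarrow> (\<forall>c. teq2 sH sH (f c) (g c))"

definition hom_tlinear :: "('h \<Rightarrow> ('h \<times> 'h) list) \<Rightarrow> bool" where
  "hom_tlinear f \<longleftrightarrow> tlinear sH sH sH f \<and> (\<forall>c. teq2 sH sH (f (\<alpha> c)) (map (\<lambda>(x, y). (\<alpha> x, \<alpha> y)) (f c)))"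

definition \<Delta>_S_flip :: "'h \<Rightarrow> ('h \<times> 'h) list" where
  "\<Delta>_S_flip c = map (\<lambda>(x, y). (S y, S x)) (\<Delta> c)"

lemma teq_funI:
  "(\<And>F c. bilinear sH sH (*) F \<Longrightarrow> eval2 F (f c) = eval2 F (g c)) \<Longrightarrow> teq_fun f g"
  unfolding teq_fun_def by (blast intro: teq2_bilinearI)

lemma teq_funD: "teq_fun f g \<Longrightarrow> bilinear sH sH (*) F \<Longrightarrow> eval2 F (f c) = eval2 F (g c)"
  unfolding teq_fun_def by (blast intro: teq2_eval2_eq vector_space_field)

lemma teq_fun_refl: "teq_fun f f"
  and teq_fun_sym: "teq_fun f g \<Longrightarrow> teq_fun g f"
  and teq_fun_trans [trans]: "teq_fun f g \<Longrightarrow> teq_fun g h \<Longrightarrow> teq_fun f h"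
  unfolding teq_fun_def teq2_def by metis+

lemma tlinear_eval2_linear: "tlinear sH sH sH f \<Longrightarrow> bilinear sH sH (*) F \<Longrightarrow> linear sH (*) (\<lambda>c. eval2 F (f c))"
  by (rule tlinear_linear[OF _ vector_space_H vector_space_field])

lemma linear_comp_tlinear:
  "tlinear sH sH sH f \<Longrightarrow> linear s sH g \<Longrightarrow> bilinear sH sH (*) F \<Longrightarrow> linear s (*) (\<lambda>x. eval2 F (f (g x)))"
  by (rule linear_comp[OF tlinear_eval2_linear])

lemma hom_tlinear_\<alpha>_eval2:
  "hom_tlinear f \<Longrightarrow> bilinear sH sH (*) F \<Longrightarrow> eval2 F (f (\<alpha> c)) = eval2 (\<lambda>x y. F (\<alpha> x) (\<alpha> y)) (f c)"
  unfolding hom_tlinear_def using teq2_eval2_eq[OF _ vector_space_field] by fastforce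

lemma hom_tlinear_inv_\<alpha>_eval2:
  assumes f: "hom_tlinear f" and F: "bilinear sH sH (*) F"
  shows "eval2 F (f (inv \<alpha> c)) = eval2 (\<lambda>x y. F (inv \<alpha> x) (inv \<alpha> y)) (f c)"
proof -
  have "bilinear sH sH (*) (\<lambda>x y. F (inv \<alpha> x) (inv \<alpha> y))"
    by (intro hopf_linear_intros linear_comp_bilinear_left[OF F] linear_comp_bilinear_right[OF F])
  from hom_tlinear_\<alpha>_eval2[OF f this, of "inv \<alpha> c"] show ?thesis by simp
qed

lemma cconv_cong: "teq_fun f f' \<Longrightarrow> teq_fun g g' \<Longrightarrow> teq_fun (cconv f g) (cconv f' g')"
proof (rule teq_funI)
  fix F c assume f: "teq_fun f f'" and g: "teq_fun g g'" and F: "bilinear sH sH (*) F"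
  note intros = hopf_linear_intros linear_comp_bilinear_left[OF F] linear_comp_bilinear_right[OF F]
  have "eval2 (\<lambda>x' y'. F (m x x') (m y y')) (g c2) = eval2 (\<lambda>x' y'. F (m x x') (m y y')) (g' c2)"
    for x y c2 by (rule teq_funD[OF g]) (intro intros)
  moreover have "eval2 (\<lambda>x y. eval2 (\<lambda>x' y'. F (m x x') (m y y')) (g' c2)) (f c1)
      = eval2 (\<lambda>x y. eval2 (\<lambda>x' y'. F (m x x') (m y y')) (g' c2)) (f' c1)" for c1 c2
    by (rule teq_funD[OF f]) (intro intros)
  ultimately show "eval2 F (cconv f g c) = eval2 F (cconv f' g' c)"
    unfolding cconv_def by simp
qed

lemma cconv_assoc:
  assumes f: "hom_tlinear f" and g: "hom_tlinear g" and h: "hom_tlinear h"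
  shows "teq_fun (cconv (cconv f g) h) (cconv f (cconv g h))"
proof (rule teq_funI)
  fix F c assume F: "bilinear sH sH (*) F"
  have tf: "tlinear sH sH sH f" and tg: "tlinear sH sH sH g" and th: "tlinear sH sH sH h"
    using f g h by (auto simp: hom_tlinear_def)
  note intros = hopf_linear_intros linear_comp_bilinear_left[OF F] linear_comp_bilinear_right[OF F]
    linear_comp_tlinear[OF tf] linear_comp_tlinear[OF tg] linear_comp_tlinear[OF th]
  have h_\<alpha>: "eval2 (\<lambda>z z'. F (m (m x x') z) (m (m y y') z')) (h c2) =
       eval2 (\<lambda>z z'. F (m (\<alpha> x) (m x' z)) (m (\<alpha> y) (m y' z'))) (h (inv \<alpha> c2))" for x x' y y' c2
  proof -
    have "eval2 (\<lambda>z z'. F (m (m x x') z) (m (m y y') z')) (h (\<alpha> (inv \<alpha> c2))) =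
       eval2 (\<lambda>z z'. F (m (m x x') (\<alpha> z)) (m (m y y') (\<alpha> z'))) (h (inv \<alpha> c2))"
      by (rule hom_tlinear_\<alpha>_eval2[OF h]) (intro intros)
    then show ?thesis by (simp add: hom_assoc)
  qed
  have f_inv_\<alpha>: "eval2 (\<lambda>x y. eval2 (\<lambda>x' y'. eval2 (\<lambda>z z'. F (m (\<alpha> x) (m x' z)) (m (\<alpha> y) (m y' z')))
        (h r)) (g q)) (f (inv \<alpha> p))
      = eval2 (\<lambda>x y. eval2 (\<lambda>x' y'. eval2 (\<lambda>z z'. F (m x (m x' z)) (m y (m y' z'))) (h r)) (g q)) (f p)"
    for p q r
    by (subst hom_tlinear_inv_\<alpha>_eval2[OF f]) (intro intros, simp)
  have "eval2 F (cconv (cconv f g) h c) =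
     eval2 (\<lambda>c1 c2. eval2 (\<lambda>p q. eval2 (\<lambda>x y. eval2 (\<lambda>x' y'. eval2 (\<lambda>z z'.
       F (m (m x x') z) (m (m y y') z')) (h c2)) (g q)) (f p)) (\<Delta> c1)) (\<Delta> c)"
    unfolding cconv_def by simp
  also have "\<dots> = eval2 (\<lambda>c1 c2. eval2 (\<lambda>p q. eval2 (\<lambda>x y. eval2 (\<lambda>x' y'. eval2 (\<lambda>z z'.
       F (m (\<alpha> x) (m x' z)) (m (\<alpha> y) (m y' z'))) (h (inv \<alpha> c2))) (g q)) (f p)) (\<Delta> c1)) (\<Delta> c)"
    by (simp add: h_\<alpha>)
  also have "\<dots> = eval2 (\<lambda>x0 w. eval2 (\<lambda>y0 z0. eval2 (\<lambda>x y. eval2 (\<lambda>x' y'. eval2 (\<lambda>z z'.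
       F (m (\<alpha> x) (m x' z)) (m (\<alpha> y) (m y' z'))) (h z0)) (g y0)) (f (inv \<alpha> x0))) (\<Delta> w)) (\<Delta> c)"
    by (rule \<Delta>_coassoc_eval2[of "(*)" "\<lambda>p q r. eval2 (\<lambda>x y. eval2 (\<lambda>x' y'. eval2 (\<lambda>z z'.
       F (m (\<alpha> x) (m x' z)) (m (\<alpha> y) (m y' z'))) (h r)) (g q)) (f p)"]) (intro intros)+
  also have "\<dots> = eval2 (\<lambda>x0 w. eval2 (\<lambda>y0 z0. eval2 (\<lambda>x y. eval2 (\<lambda>x' y'. eval2 (\<lambda>z z'.
       F (m x (m x' z)) (m y (m y' z'))) (h z0)) (g y0)) (f x0)) (\<Delta> w)) (\<Delta> c)"
    by (simp add: f_inv_\<alpha>)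
  also have "\<dots> = eval2 F (cconv f (cconv g h) c)"
    unfolding cconv_def by (simp add: eval2_swap[where ys="\<Delta> _"])
  finally show "eval2 F (cconv (cconv f g) h c) = eval2 F (cconv f (cconv g h) c)" .
qed

lemma cconv_unit_right: assumes f: "hom_tlinear f" shows "teq_fun (cconv f cconv_unit) f"
proof (rule teq_funI)
  fix F c assume F: "bilinear sH sH (*) F"
  have F_\<alpha>: "bilinear sH sH (*) (\<lambda>x y. F (\<alpha> x) (\<alpha> y))"
    by (intro hopf_linear_intros linear_comp_bilinear_left[OF F] linear_comp_bilinear_right[OF F])
  have tf: "tlinear sH sH sH f" using f by (simp add: hom_tlinear_def)
  have "eval2 F (f c) = eval2 (\<lambda>x y. F (\<alpha> x) (\<alpha> y)) (f (inv \<alpha> c))"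
    using hom_tlinear_\<alpha>_eval2[OF f F, of "inv \<alpha> c"] by simp
  also have "\<dots> = eval2 (\<lambda>x y. F (\<alpha> x) (\<alpha> y)) (f (eval2 (\<lambda>x y. sH (\<epsilon> y) x) (\<Delta> c)))"
    by (simp add: counit_right)
  also have "\<dots> = eval2 F (cconv f cconv_unit c)"
    unfolding cconv_def cconv_unit_def
    by (simp add: eval2_linear[OF tlinear_eval2_linear[OF tf F_\<alpha>]]
        linear_scale[OF tlinear_eval2_linear[OF tf F_\<alpha>]] mult_scale_right unit_right
        bilinear_scale_left[OF F] eval2_mult[symmetric])
  finally show "eval2 F (cconv f cconv_unit c) = eval2 F (f c)" ..
qed

lemma cconv_unit_left: assumes f: "hom_tlinear f" shows "teq_fun (cconv cconv_unit f) f"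
proof (rule teq_funI)
  fix F c assume F: "bilinear sH sH (*) F"
  have F_\<alpha>: "bilinear sH sH (*) (\<lambda>x y. F (\<alpha> x) (\<alpha> y))"
    by (intro hopf_linear_intros linear_comp_bilinear_left[OF F] linear_comp_bilinear_right[OF F])
  have tf: "tlinear sH sH sH f" using f by (simp add: hom_tlinear_def)
  have "eval2 F (f c) = eval2 (\<lambda>x y. F (\<alpha> x) (\<alpha> y)) (f (inv \<alpha> c))"
    using hom_tlinear_\<alpha>_eval2[OF f F, of "inv \<alpha> c"] by simp
  also have "\<dots> = eval2 (\<lambda>x y. F (\<alpha> x) (\<alpha> y)) (f (eval2 (\<lambda>x y. sH (\<epsilon> x) y) (\<Delta> c)))"
    by (simp add: counit_left)
  also have "\<dots> = eval2 F (cconv cconv_unit f c)"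
    unfolding cconv_def cconv_unit_def
    by (simp add: eval2_linear[OF tlinear_eval2_linear[OF tf F_\<alpha>]]
        linear_scale[OF tlinear_eval2_linear[OF tf F_\<alpha>]] mult_scale_left unit_left
        bilinear_scale_left[OF F] eval2_mult[symmetric])
  finally show "eval2 F (cconv cconv_unit f c) = eval2 F (f c)" ..
qed

lemma hom_tlinear_\<Delta>: "hom_tlinear \<Delta>"
  unfolding hom_tlinear_def using \<Delta>_tlinear \<Delta>_\<alpha> by simp

lemma hom_tlinear_\<Delta>_S: "hom_tlinear (\<lambda>c. \<Delta> (S c))"
  unfolding hom_tlinear_def tlinear_def bilin_iff_bilinear
  by (simp add: S_\<alpha> \<Delta>_\<alpha>)
    (intro allI impI linear_comp_\<Delta> vector_space_field linear_comp_S linear_ident vector_space_H)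

lemma hom_tlinear_\<Delta>_S_flip: "hom_tlinear \<Delta>_S_flip"
  unfolding hom_tlinear_def
proof (intro conjI allI)
  show "tlinear sH sH sH \<Delta>_S_flip"
    unfolding tlinear_def bilin_iff_bilinear \<Delta>_S_flip_def eval2_map
  proof (intro allI impI)
    fix F :: "'h \<Rightarrow> 'h \<Rightarrow> 'k" assume F: "bilinear sH sH (*) F"
    show "linear sH (*) (\<lambda>v. eval2 (\<lambda>x y. F (S y) (S x)) (\<Delta> v))"
      by (intro hopf_linear_intros linear_comp_bilinear_left[OF F] linear_comp_bilinear_right[OF F])
  qed
  fix c show "teq2 sH sH (\<Delta>_S_flip (\<alpha> c)) (map (\<lambda>(x, y). (\<alpha> x, \<alpha> y)) (\<Delta>_S_flip c))"
  proof (rule teq2_bilinearI)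
    fix F assume F: "bilinear sH sH (*) F"
    have "bilinear sH sH (*) (\<lambda>x y. F (S y) (S x))"
      by (intro hopf_linear_intros linear_comp_bilinear_left[OF F] linear_comp_bilinear_right[OF F])
    then show "eval2 F (\<Delta>_S_flip (\<alpha> c)) = eval2 F (map (\<lambda>(x, y). (\<alpha> x, \<alpha> y)) (\<Delta>_S_flip c))"
      unfolding \<Delta>_S_flip_def eval2_map by (simp add: \<Delta>_\<alpha>_eval2[OF vector_space_field] S_\<alpha>)
  qed
qed

lemma cconv_\<Delta>_S_\<Delta>: "teq_fun (cconv (\<lambda>c. \<Delta> (S c)) \<Delta>) cconv_unit"
proof (rule teq_funI)
  fix F c assume F: "bilinear sH sH (*) F"
  have \<Delta>_mult_F: "eval2 (\<lambda>x y. eval2 (\<lambda>x' y'. F (m x x') (m y y')) (\<Delta> c2)) (\<Delta> (S c1))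
      = eval2 F (\<Delta> (m (S c1) c2))" for c1 c2
    using teq2_eval2_eq[OF \<Delta>_mult[of "S c1" c2] vector_space_field F] by simp
  have "eval2 F (cconv (\<lambda>c. \<Delta> (S c)) \<Delta> c) = eval2 (\<lambda>c1 c2. eval2 F (\<Delta> (m (S c1) c2))) (\<Delta> c)"
    unfolding cconv_def by (simp add: \<Delta>_mult_F)
  also have "\<dots> = eval2 F (\<Delta> (eval2 (\<lambda>x y. m (S x) y) (\<Delta> c)))"
    by (simp add: eval2_linear[OF tlinear_eval2_linear[OF \<Delta>_tlinear F]])
  also have "\<dots> = eval2 F (cconv_unit c)"
    by (simp add: antipode_left linear_scale[OF tlinear_eval2_linear[OF \<Delta>_tlinear F]]
        \<Delta>_unit_eval2[OF vector_space_field F] cconv_unit_def bilinear_scale_left[OF F])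
  finally show "eval2 F (cconv (\<lambda>c. \<Delta> (S c)) \<Delta> c) = eval2 F (cconv_unit c)" .
qed

lemma cconv_\<Delta>_\<Delta>_S_flip: "teq_fun (cconv \<Delta> \<Delta>_S_flip) cconv_unit"
proof (rule teq_funI)
  fix F c assume F: "bilinear sH sH (*) F"
  note intros = hopf_linear_intros linear_comp_bilinear_left[OF F] linear_comp_bilinear_right[OF F]
  have \<Delta>_\<alpha>_F: "eval2 (\<lambda>a b. F (m A (S b)) (m B (S a))) (\<Delta> (\<alpha> z))
      = eval2 (\<lambda>a b. F (m A (S (\<alpha> b))) (m B (S (\<alpha> a)))) (\<Delta> z)" for A B z
    by (rule \<Delta>_\<alpha>_eval2[OF vector_space_field]) (intro intros)
  have coassoc_F: "eval2 (\<lambda>y0 z0. eval2 (\<lambda>a b. F (m A (S (\<alpha> b))) (m y0 (S (\<alpha> a)))) (\<Delta> z0)) (\<Delta> w)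
      = eval2 (\<lambda>w' x'. eval2 (\<lambda>y z. F (m A (S x')) (m (\<alpha> y) (S (\<alpha> z)))) (\<Delta> w')) (\<Delta> w)" for A w
  proof -
    have "eval2 (\<lambda>w' x'. eval2 (\<lambda>y z. F (m A (S (\<alpha> (inv \<alpha> x')))) (m (\<alpha> y) (S (\<alpha> z)))) (\<Delta> w')) (\<Delta> w)
      = eval2 (\<lambda>x w. eval2 (\<lambda>y z. F (m A (S (\<alpha> z))) (m (\<alpha> (inv \<alpha> x)) (S (\<alpha> y)))) (\<Delta> w)) (\<Delta> w)"
      by (rule \<Delta>_coassoc_eval2[of "(*)" "\<lambda>p q r. F (m A (S (\<alpha> r))) (m (\<alpha> p) (S (\<alpha> q)))"])
        (intro intros)+
    then show ?thesis by simp
  qed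
  have antipode_F: "eval2 (\<lambda>y z. F A (m (\<alpha> y) (\<alpha> (S z)))) (\<Delta> w') = \<epsilon> w' * F A u" for A w'
  proof -
    have "linear sH (*) (\<lambda>x. F A (\<alpha> x))" by (intro intros)
    from antipode_right_linear[OF this, of w'] show ?thesis by (simp add: \<alpha>_mult \<alpha>_unit)
  qed
  have counit_F: "eval2 (\<lambda>w' x'. \<epsilon> w' * F (m A (S x')) u) (\<Delta> w) = F (m A (S (inv \<alpha> w))) u" for A w
    by (rule counit_left_linear) (intro intros)
  have "eval2 F (cconv \<Delta> \<Delta>_S_flip c) = eval2 (\<lambda>c1 c2. eval2 (\<lambda>p q. eval2 (\<lambda>a b.
      F (m p (S b)) (m q (S a))) (\<Delta> (\<alpha> (inv \<alpha> c2)))) (\<Delta> c1)) (\<Delta> c)"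
    unfolding cconv_def \<Delta>_S_flip_def by (simp del: map_map)
  also have "\<dots> = eval2 (\<lambda>x0 w. eval2 (\<lambda>y0 z0. eval2 (\<lambda>a b.
      F (m (inv \<alpha> x0) (S b)) (m y0 (S a))) (\<Delta> (\<alpha> z0))) (\<Delta> w)) (\<Delta> c)"
    by (rule \<Delta>_coassoc_eval2[of "(*)" "\<lambda>p q r. eval2 (\<lambda>a b. F (m p (S b)) (m q (S a))) (\<Delta> (\<alpha> r))"])
      (intro intros)+
  also have "\<dots> = eval2 (\<lambda>x0 w. eval2 (\<lambda>w' x'. \<epsilon> w' * F (m (inv \<alpha> x0) (S x')) u) (\<Delta> w)) (\<Delta> c)"
    by (simp only: \<Delta>_\<alpha>_F coassoc_F) (simp add: S_\<alpha> antipode_F)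
  also have "\<dots> = F (inv \<alpha> (eval2 (\<lambda>x w. m x (S w)) (\<Delta> c))) u"
    by (simp add: counit_F eval2_linear[OF linear_comp_bilinear_left[OF F inv_\<alpha>_linear]]
        inv_\<alpha>_mult S_inv_\<alpha>)
  also have "\<dots> = eval2 F (cconv_unit c)"
    by (simp add: antipode_right inv_\<alpha>_scale cconv_unit_def)
  finally show "eval2 F (cconv \<Delta> \<Delta>_S_flip c) = eval2 F (cconv_unit c)" .
qed

lemma teq_fun_\<Delta>_S: "teq_fun (\<lambda>c. \<Delta> (S c)) \<Delta>_S_flip"
proof -
  have "teq_fun (\<lambda>c. \<Delta> (S c)) (cconv (\<lambda>c. \<Delta> (S c)) cconv_unit)"
    by (rule teq_fun_sym[OF cconv_unit_right[OF hom_tlinear_\<Delta>_S]])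
  also have "teq_fun \<dots> (cconv (\<lambda>c. \<Delta> (S c)) (cconv \<Delta> \<Delta>_S_flip))"
    by (rule cconv_cong[OF teq_fun_refl teq_fun_sym[OF cconv_\<Delta>_\<Delta>_S_flip]])
  also have "teq_fun \<dots> (cconv (cconv (\<lambda>c. \<Delta> (S c)) \<Delta>) \<Delta>_S_flip)"
    by (rule teq_fun_sym[OF cconv_assoc[OF hom_tlinear_\<Delta>_S hom_tlinear_\<Delta> hom_tlinear_\<Delta>_S_flip]])
  also have "teq_fun \<dots> (cconv cconv_unit \<Delta>_S_flip)"
    by (rule cconv_cong[OF cconv_\<Delta>_S_\<Delta> teq_fun_refl])
  also have "teq_fun \<dots> \<Delta>_S_flip"
    by (rule cconv_unit_left[OF hom_tlinear_\<Delta>_S_flip])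
  finally show ?thesis .
qed

lemma \<Delta>_S_eval2:
  assumes "vector_space s'" "bilinear sH sH s' F"
  shows "eval2 F (\<Delta> (S h)) = eval2 (\<lambda>x y. F (S y) (S x)) (\<Delta> h)"
proof -
  have "teq2 sH sH (\<Delta> (S h)) (\<Delta>_S_flip h)" using teq_fun_\<Delta>_S by (simp add: teq_fun_def)
  from teq2_eval2_eq[OF this assms] show ?thesis by (simp add: \<Delta>_S_flip_def)
qed

lemma S_unit: "S u = u"
proof -
  have "eval2 (\<lambda>x y. m (S x) y) (\<Delta> u) = m (S u) u"
    by (rule \<Delta>_unit_eval2[OF vector_space_H]) (intro hopf_linear_intros)
  then have "\<alpha> (S u) = u"
    using antipode_left[of u] by (simp add: \<epsilon>_unit unit_right vector_space.vector_space_assms(4)[OF vector_space_H])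
  then show ?thesis by (metis \<alpha>_unit S_\<alpha> inv_\<alpha>_\<alpha>)
qed

end

section \<open>Coinvariant forms of a left-covariant Hom-FODC\<close>

locale left_covariant_hom_fodc = hom_hopf_algebra sH m u \<alpha> \<Delta> \<epsilon> S
  for sH :: "'k::field \<Rightarrow> 'h::ab_group_add \<Rightarrow> 'h"
    and m u \<alpha> \<Delta> \<epsilon> S +
  fixes sG :: "'k \<Rightarrow> 'g::ab_group_add \<Rightarrow> 'g" and \<gamma> :: "'g \<Rightarrow> 'g"
    and la :: "'h \<Rightarrow> 'g \<Rightarrow> 'g" and ra :: "'g \<Rightarrow> 'h \<Rightarrow> 'g"
    and d :: "'h \<Rightarrow> 'g" and \<phi> :: "'g \<Rightarrow> ('h \<times> 'g) list"
  assumes fodc: "hom_fodc sH m u \<alpha> sG \<gamma> la ra d"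
    and covariant: "left_covariant sH m \<alpha> \<Delta> \<epsilon> sG \<gamma> la ra d \<phi>"
begin

lemma vector_space_G: "vector_space sG"
  and \<gamma>_linear: "linear sG sG \<gamma>" and \<gamma>_bij: "bij \<gamma>"
  and la_linear_right: "\<And>a. linear sG sG (la a)" and la_linear_left: "\<And>v. linear sH sG (\<lambda>a. la a v)"
  and ra_linear_right: "\<And>v. linear sH sG (ra v)" and ra_linear_left: "\<And>a. linear sG sG (\<lambda>v. ra v a)"
  and \<gamma>_la: "\<And>a v. \<gamma> (la a v) = la (\<alpha> a) (\<gamma> v)"
  and la_hom_assoc: "\<And>a b v. la (\<alpha> a) (la b v) = la (m a b) (\<gamma> v)" and la_unit: "\<And>v. la u v = \<gamma> v"
  and ra_unit: "\<And>v. ra v u = \<gamma> v"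
  and la_ra: "\<And>a b v. la (\<alpha> a) (ra v b) = ra (la a v) (\<alpha> b)"
  and d_linear: "linear sH sG d" and d_leibniz: "\<And>h g. d (m h g) = la h (d g) + ra (d h) g"
  and d_\<alpha>: "\<And>h. d (\<alpha> h) = \<gamma> (d h)"
  and spanned_by_forms: "\<And>w. w \<in> module.span sG {ra (la h (d g)) f | h g f. True}"
  using fodc unfolding hom_fodc_def hom_bimodule_def by auto

lemma \<phi>_tlinear: "tlinear sG sH sG \<phi>"
  and \<phi>_\<gamma>: "\<And>v. teq2 sH sG (\<phi> (\<gamma> v)) (map (\<lambda>(x, w). (\<alpha> x, \<gamma> w)) (\<phi> v))"
  and \<phi>_bimodule: "\<And>h w g. teq2 sH sG (\<phi> (la (\<alpha> h) (ra w g)))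
        [(m x (m y z), la x' (ra w' z')). (x, x') \<leftarrow> \<Delta> (\<alpha> h), (y, w') \<leftarrow> \<phi> w, (z, z') \<leftarrow> \<Delta> g]"
  and \<phi>_d: "\<And>h. teq2 sH sG (\<phi> (d h)) (map (\<lambda>(x, y). (x, d y)) (\<Delta> h))"
  using covariant unfolding left_covariant_def hom_left_comodule_def by auto

interpretation vG: vector_space sG by (rule vector_space_G)
interpretation vH: vector_space sH by (rule vector_space_H)

lemma inv_\<gamma>_linear: "linear sG sG (inv \<gamma>)"
  by (rule linear_inv_bij[OF \<gamma>_linear \<gamma>_bij])

lemma \<gamma>_inv_\<gamma> [simp]: "\<gamma> (inv \<gamma> x) = x"
  and inv_\<gamma>_\<gamma> [simp]: "inv \<gamma> (\<gamma> x) = x"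
  by (simp_all add: \<gamma>_bij bij_is_surj surj_f_inv_f bij_is_inj)

lemma inv_\<gamma>_la: "inv \<gamma> (la a v) = la (inv \<alpha> a) (inv \<gamma> v)"
  by (metis \<gamma>_inv_\<gamma> \<gamma>_la inv_\<gamma>_\<gamma> \<alpha>_inv_\<alpha>)

lemma d_inv_\<alpha>: "d (inv \<alpha> h) = inv \<gamma> (d h)"
  by (metis \<alpha>_inv_\<alpha> d_\<alpha> inv_\<gamma>_\<gamma>)

lemma la_scale_left: "la (sH c a) v = sG c (la a v)"
  using linear_scale[OF la_linear_left] by simp

lemma scale_G_linear: "linear sG sG (sG c)"
  using linear_scale_fun[OF vector_space_G linear_ident[OF vector_space_G]] by simp

lemma linear_comp_\<gamma>: "linear s sG f \<Longrightarrow> linear s sG (\<lambda>x. \<gamma> (f x))"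
  by (rule linear_comp[OF \<gamma>_linear])

lemma linear_comp_inv_\<gamma>: "linear s sG f \<Longrightarrow> linear s sG (\<lambda>x. inv \<gamma> (f x))"
  by (rule linear_comp[OF inv_\<gamma>_linear])

lemma linear_comp_d: "linear s sH f \<Longrightarrow> linear s sG (\<lambda>x. d (f x))"
  by (rule linear_comp[OF d_linear])

lemma linear_comp_la_left: "linear s sH f \<Longrightarrow> linear s sG (\<lambda>x. la (f x) c)"
  by (rule linear_comp[OF la_linear_left])

lemma linear_comp_la_right: "linear s sG f \<Longrightarrow> linear s sG (\<lambda>x. la c (f x))"
  by (rule linear_comp[OF la_linear_right])

lemma linear_comp_ra_left: "linear s sG f \<Longrightarrow> linear s sG (\<lambda>x. ra (f x) c)"
  by (rule linear_comp[OF ra_linear_left])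

lemma linear_comp_ra_right: "linear s sH f \<Longrightarrow> linear s sG (\<lambda>x. ra c (f x))"
  by (rule linear_comp[OF ra_linear_right])

lemma linear_comp_\<phi>:
  "vector_space s' \<Longrightarrow> linear s sG f \<Longrightarrow> bilinear sH sG s' F \<Longrightarrow> linear s s' (\<lambda>x. eval2 F (\<phi> (f x)))"
  by (rule linear_comp[of sG s' "\<lambda>x. eval2 F (\<phi> x)"]) (rule tlinear_linear[OF \<phi>_tlinear vector_space_G])

lemmas linear_intros = hopf_linear_intros linear_scale_fun[OF vector_space_G]
  linear_scale_by_fun[OF vector_space_G] linear_comp_\<gamma> linear_comp_inv_\<gamma> linear_comp_d
  linear_comp_la_left linear_comp_la_right linear_comp_ra_left linear_comp_ra_right linear_comp_\<phi>
  vector_space_G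

abbreviation \<omega> :: "'h \<Rightarrow> 'g" where "\<omega> \<equiv> omegaG \<Delta> S la d"

lemma \<omega>_eq: "\<omega> g = eval2 (\<lambda>x y. la (S x) (d y)) (\<Delta> g)"
  by (simp add: omegaG_def eval2_def)

lemma \<omega>_linear: "linear sH sG \<omega>"
  unfolding \<omega>_eq by (intro linear_intros)

lemma d_unit: "d u = 0"
proof -
  have "\<gamma> (d u) = \<gamma> (d u) + \<gamma> (d u)"
    using d_leibniz[of u u] by (simp add: la_unit ra_unit unit_left d_\<alpha>)
  then have "\<gamma> (d u) = 0" by simp
  then show ?thesis using d_\<alpha>[of u] \<alpha>_unit by simp
qed

lemma \<omega>_unit: "\<omega> u = 0"
proof -
  have "\<omega> u = la (S u) (d u)"
    unfolding \<omega>_eq by (rule \<Delta>_unit_eval2[OF vector_space_G]) (intro linear_intros)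
  then show ?thesis by (simp add: d_unit linear_zero[OF la_linear_right])
qed

lemma \<omega>_\<alpha>: "\<omega> (\<alpha> g) = \<gamma> (\<omega> g)"
proof -
  have "\<omega> (\<alpha> g) = eval2 (\<lambda>x y. la (S (\<alpha> x)) (d (\<alpha> y))) (\<Delta> g)"
    unfolding \<omega>_eq by (rule \<Delta>_\<alpha>_eval2[OF vector_space_G]) (intro linear_intros)
  then show ?thesis unfolding \<omega>_eq by (simp add: eval2_linear[OF \<gamma>_linear] \<gamma>_la S_\<alpha> d_\<alpha>)
qed

lemma \<omega>_inv_\<alpha>: "\<omega> (inv \<alpha> g) = inv \<gamma> (\<omega> g)"
  by (metis \<omega>_\<alpha> \<alpha>_inv_\<alpha> inv_\<gamma>_\<gamma>)

lemma \<phi>_\<gamma>_eval2: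
  "vector_space s' \<Longrightarrow> bilinear sH sG s' F \<Longrightarrow> eval2 F (\<phi> (\<gamma> v)) = eval2 (\<lambda>x w. F (\<alpha> x) (\<gamma> w)) (\<phi> v)"
  using teq2_eval2_eq[OF \<phi>_\<gamma>] by simp

lemma \<phi>_d_eval2:
  "vector_space s' \<Longrightarrow> bilinear sH sG s' F \<Longrightarrow> eval2 F (\<phi> (d h)) = eval2 (\<lambda>x y. F x (d y)) (\<Delta> h)"
  using teq2_eval2_eq[OF \<phi>_d] by simp

lemma \<phi>_la_d_eval2:
  assumes vs: "vector_space s'" and F: "bilinear sH sG s' F"
  shows "eval2 F (\<phi> (la h (d g)))
    = eval2 (\<lambda>h1 h2. eval2 (\<lambda>g1 g2. F (m h1 g1) (la h2 (d g2))) (\<Delta> g)) (\<Delta> h)"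
proof -
  note intros = linear_intros linear_comp_bilinear_left[OF F] linear_comp_bilinear_right[OF F] vs
  have "la h (d g) = la (\<alpha> (inv \<alpha> h)) (ra (d (inv \<alpha> g)) u)"
    by (simp add: ra_unit d_\<alpha>[symmetric])
  then have "eval2 F (\<phi> (la h (d g))) = eval2 F [(m x (m y z), la x' (ra w' z')).
      (x, x') \<leftarrow> \<Delta> (\<alpha> (inv \<alpha> h)), (y, w') \<leftarrow> \<phi> (d (inv \<alpha> g)), (z, z') \<leftarrow> \<Delta> u]"
    by (metis teq2_eval2_eq[OF \<phi>_bimodule vs F])
  also have "\<dots> = eval2 (\<lambda>x x'. eval2 (\<lambda>y w'. F (m x (\<alpha> y)) (la x' (\<gamma> w'))) (\<phi> (d (inv \<alpha> g)))) (\<Delta> h)"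
  proof -
    have "eval2 (\<lambda>z z'. F (m x (m y z)) (la x' (ra w' z'))) (\<Delta> u) = F (m x (\<alpha> y)) (la x' (\<gamma> w'))"
      for x x' y w'
      by (subst \<Delta>_unit_eval2[OF vs]) (intro intros, simp add: unit_right ra_unit)
    then show ?thesis by simp
  qed
  also have "\<dots> = eval2 (\<lambda>x x'. eval2 (\<lambda>y y'. F (m x (\<alpha> y)) (la x' (\<gamma> (d y')))) (\<Delta> (inv \<alpha> g))) (\<Delta> h)"
  proof -
    have "eval2 (\<lambda>y w'. F (m x (\<alpha> y)) (la x' (\<gamma> w'))) (\<phi> (d (inv \<alpha> g)))
        = eval2 (\<lambda>y y'. F (m x (\<alpha> y)) (la x' (\<gamma> (d y')))) (\<Delta> (inv \<alpha> g))" for x x'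
      by (rule \<phi>_d_eval2[OF vs]) (intro intros)
    then show ?thesis by simp
  qed
  also have "\<dots> = eval2 (\<lambda>h1 h2. eval2 (\<lambda>g1 g2. F (m h1 g1) (la h2 (d g2))) (\<Delta> g)) (\<Delta> h)"
  proof -
    have "eval2 (\<lambda>y y'. F (m x (\<alpha> y)) (la x' (\<gamma> (d y')))) (\<Delta> (inv \<alpha> g))
        = eval2 (\<lambda>y y'. F (m x (\<alpha> (inv \<alpha> y))) (la x' (\<gamma> (d (inv \<alpha> y'))))) (\<Delta> g)" for x x'
      by (rule \<Delta>_inv_\<alpha>_eval2[OF vs]) (intro intros)
    then show ?thesis by (simp add: d_\<alpha>[symmetric])
  qed
  finally show ?thesis .
qed

lemma \<phi>_la_S_d_eval2:
  assumes vs: "vector_space s'" and F: "bilinear sH sG s' F"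
  shows "eval2 F (\<phi> (la (S h) (d g)))
    = eval2 (\<lambda>h1 h2. eval2 (\<lambda>g1 g2. F (m (S h2) g1) (la (S h1) (d g2))) (\<Delta> g)) (\<Delta> h)"
proof -
  have "eval2 F (\<phi> (la (S h) (d g)))
      = eval2 (\<lambda>h1 h2. eval2 (\<lambda>g1 g2. F (m h1 g1) (la h2 (d g2))) (\<Delta> g)) (\<Delta> (S h))"
    by (rule \<phi>_la_d_eval2[OF vs F])
  also have "\<dots> = eval2 (\<lambda>h1 h2. eval2 (\<lambda>g1 g2. F (m (S h2) g1) (la (S h1) (d g2))) (\<Delta> g)) (\<Delta> h)"
    by (rule \<Delta>_S_eval2[OF vs])
      (intro linear_intros linear_comp_bilinear_left[OF F] linear_comp_bilinear_right[OF F] vs)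
  finally show ?thesis .
qed

definition coinv_proj :: "'g \<Rightarrow> 'g" where
  "coinv_proj v = eval2 (\<lambda>a w. la (S a) w) (\<phi> v)"

lemma coinv_proj_linear: "linear sG sG coinv_proj"
  unfolding coinv_proj_def by (intro linear_intros)

lemma coinv_proj_\<gamma>: "coinv_proj (\<gamma> v) = \<gamma> (coinv_proj v)"
proof -
  have "coinv_proj (\<gamma> v) = eval2 (\<lambda>a w. la (S (\<alpha> a)) (\<gamma> w)) (\<phi> v)"
    unfolding coinv_proj_def by (rule \<phi>_\<gamma>_eval2[OF vector_space_G]) (intro linear_intros)
  then show ?thesis unfolding coinv_proj_def by (simp add: eval2_linear[OF \<gamma>_linear] \<gamma>_la S_\<alpha>)
qed

lemma coinv_proj_la_d: "coinv_proj (la h (d g)) = sG (\<epsilon> h) (\<omega> (\<alpha> g))"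
proof -
  have la_mult: "la (m a b) w = la (\<alpha> a) (la b (inv \<gamma> w))" for a b w
    using la_hom_assoc[of a b "inv \<gamma> w"] by simp
  have la_la: "la c (la (inv \<alpha> b) z) = la (inv \<alpha> (m c b)) (\<gamma> z)" for b c z
    using la_hom_assoc[of "inv \<alpha> c" "inv \<alpha> b" z] by (simp add: inv_\<alpha>_mult)
  have "coinv_proj (la h (d g))
      = eval2 (\<lambda>h1 h2. eval2 (\<lambda>g1 g2. la (S (m h1 g1)) (la h2 (d g2))) (\<Delta> g)) (\<Delta> h)"
    unfolding coinv_proj_def by (rule \<phi>_la_d_eval2[OF vector_space_G]) (intro linear_intros)
  also have "\<dots> = eval2 (\<lambda>h1 h2. eval2 (\<lambda>g1 g2.
      la (\<alpha> (S g1)) (la (inv \<alpha> (m (S h1) h2)) (d g2))) (\<Delta> g)) (\<Delta> h)"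
    by (simp add: S_mult la_mult inv_\<gamma>_la la_la)
  also have "\<dots> = eval2 (\<lambda>g1 g2. la (\<alpha> (S g1))
      (la (inv \<alpha> (eval2 (\<lambda>h1 h2. m (S h1) h2) (\<Delta> h))) (d g2))) (\<Delta> g)"
    by (simp add: eval2_linear[OF la_linear_right] eval2_linear[OF la_linear_left]
        eval2_linear[OF inv_\<alpha>_linear] eval2_swap[where ys="\<Delta> g"])
  also have "\<dots> = sG (\<epsilon> h) (eval2 (\<lambda>x y. la (S (\<alpha> x)) (d (\<alpha> y))) (\<Delta> g))"
    by (simp add: antipode_left inv_\<alpha>_scale la_scale_left linear_scale[OF la_linear_right] la_unit
        S_\<alpha> d_\<alpha> eval2_linear[OF scale_G_linear])
  also have "\<dots> = sG (\<epsilon> h) (\<omega> (\<alpha> g))"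
    unfolding \<omega>_eq by (subst \<Delta>_\<alpha>_eval2[OF vector_space_G]) (intro linear_intros, rule refl)
  finally show ?thesis .
qed

lemma span_la_d: "v \<in> vG.span {la h (d g) | h g. True}"
proof -
  let ?B = "{la h (d g) | h g. True}"
  have "ra (la h (d g)) f \<in> vG.span ?B" for h g f
  proof -
    have "ra (la h (d g)) f = la (\<alpha> h) (ra (d g) (inv \<alpha> f))"
      using la_ra[of h "d g" "inv \<alpha> f"] by simp
    also have "\<dots> = la (\<alpha> h) (d (m g (inv \<alpha> f))) - la (m h g) (d f)"
      by (simp add: d_leibniz linear_add[OF la_linear_right] la_hom_assoc d_\<alpha>[symmetric])
    finally show ?thesis by (auto intro: vG.span_diff vG.span_base)
  qed
  then have "vG.span {ra (la h (d g)) f | h g f. True} \<subseteq> vG.span ?B"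
    by (intro vG.span_minimal) auto
  with spanned_by_forms[of v] show ?thesis by blast
qed

lemma coinv_proj_in_range: "coinv_proj v \<in> range \<omega>"
proof -
  have hom: "module_hom sG sG coinv_proj" "module_hom sH sG \<omega>"
    using coinv_proj_linear \<omega>_linear by (simp_all add: linear_iff_module_hom)
  have "coinv_proj ` {la h (d g) | h g. True} \<subseteq> range \<omega>"
    by (auto simp: coinv_proj_la_d linear_scale[OF \<omega>_linear, symmetric])
  then have "vG.span (coinv_proj ` {la h (d g) | h g. True}) \<subseteq> range \<omega>"
    using module_hom.subspace_image[OF hom(2) vH.subspace_UNIV] by (intro vG.span_minimal)
  then show ?thesis
    using span_la_d[of v] module_hom.span_image[OF hom(1)] by blast
qed

abbreviation coinv_\<Gamma> :: "'g set" where "coinv_\<Gamma> \<equiv> coinv sH u sG \<gamma> \<phi>"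

lemma coinv_proj_coinv:
  assumes "v \<in> coinv_\<Gamma>" shows "coinv_proj v = v"
proof -
  have "teq2 sH sG (\<phi> v) [(u, inv \<gamma> v)]" using assms by (simp add: coinv_def)
  moreover have "bilinear sH sG sG (\<lambda>a w. la (S a) w)" by (intro linear_intros)
  ultimately have "coinv_proj v = la (S u) (inv \<gamma> v)"
    unfolding coinv_proj_def by (simp add: teq2_eval2_eq[OF _ vector_space_G])
  then show ?thesis by (simp add: S_unit la_unit)
qed

lemma \<omega>_coinv: "\<omega> g \<in> coinv_\<Gamma>"
  unfolding coinv_def
proof (simp, rule teq2_bilinearI)
  fix F :: "'h \<Rightarrow> 'g \<Rightarrow> 'k" assume F: "bilinear sH sG (*) F"
  note intros = linear_intros linear_comp_bilinear_left[OF F] linear_comp_bilinear_right[OF F]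
  have \<Delta>_\<alpha>_F: "eval2 (\<lambda>c e. F (m (S y0) c) (la A (d e))) (\<Delta> (\<alpha> z0))
      = eval2 (\<lambda>c e. F (m (S y0) (\<alpha> c)) (la A (d (\<alpha> e)))) (\<Delta> z0)" for y0 z0 A
    by (rule \<Delta>_\<alpha>_eval2[OF vector_space_field]) (intro intros)
  have coassoc_F: "eval2 (\<lambda>y0 z0. eval2 (\<lambda>c e. F (m (S y0) (\<alpha> c)) (la A (d (\<alpha> e)))) (\<Delta> z0)) (\<Delta> w)
      = eval2 (\<lambda>w' x'. eval2 (\<lambda>y z. F (m (S (\<alpha> y)) (\<alpha> z)) (la A (d x'))) (\<Delta> w')) (\<Delta> w)" for A w
  proof -
    have "eval2 (\<lambda>w' x'. eval2 (\<lambda>y z. F (m (S (\<alpha> y)) (\<alpha> z)) (la A (d (\<alpha> (inv \<alpha> x'))))) (\<Delta> w')) (\<Delta> w)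
      = eval2 (\<lambda>x w. eval2 (\<lambda>y z. F (m (S (\<alpha> (inv \<alpha> x))) (\<alpha> y)) (la A (d (\<alpha> z)))) (\<Delta> w)) (\<Delta> w)"
      by (rule \<Delta>_coassoc_eval2[of "(*)" "\<lambda>p q r. F (m (S (\<alpha> p)) (\<alpha> q)) (la A (d (\<alpha> r)))"])
        (intro intros)+
    then show ?thesis by simp
  qed
  have antipode_F: "eval2 (\<lambda>y z. F (m (\<alpha> (S y)) (\<alpha> z)) B) (\<Delta> w') = \<epsilon> w' * F u B" for B w'
  proof -
    have "linear sH (*) (\<lambda>x. F (\<alpha> x) B)" by (intro intros)
    from antipode_left_linear[OF this, of w'] show ?thesis by (simp add: \<alpha>_mult \<alpha>_unit)
  qed
  have counit_F: "eval2 (\<lambda>w' x'. \<epsilon> w' * F u (la A (d x'))) (\<Delta> w) = F u (la A (d (inv \<alpha> w)))" for A w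
    by (rule counit_left_linear) (intro intros)
  have "eval2 F (\<phi> (\<omega> g)) = eval2 (\<lambda>g1 g2. eval2 F (\<phi> (la (S g1) (d g2)))) (\<Delta> g)"
    unfolding \<omega>_eq by (rule eval2_linear[of sG "(*)"]) (intro intros)
  also have "\<dots> = eval2 (\<lambda>g1 g2. eval2 (\<lambda>p q. eval2 (\<lambda>c e.
      F (m (S q) c) (la (S p) (d e))) (\<Delta> (\<alpha> (inv \<alpha> g2)))) (\<Delta> g1)) (\<Delta> g)"
    by (simp add: \<phi>_la_S_d_eval2[OF vector_space_field F])
  also have "\<dots> = eval2 (\<lambda>x0 w. eval2 (\<lambda>y0 z0. eval2 (\<lambda>c e.
      F (m (S y0) c) (la (S (inv \<alpha> x0)) (d e))) (\<Delta> (\<alpha> z0))) (\<Delta> w)) (\<Delta> g)"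
    by (rule \<Delta>_coassoc_eval2[of "(*)" "\<lambda>p q r. eval2 (\<lambda>c e. F (m (S q) c) (la (S p) (d e))) (\<Delta> (\<alpha> r))"])
      (intro intros)+
  also have "\<dots> = eval2 (\<lambda>x0 w. eval2 (\<lambda>w' x'. \<epsilon> w' * F u (la (S (inv \<alpha> x0)) (d x'))) (\<Delta> w)) (\<Delta> g)"
    by (simp only: \<Delta>_\<alpha>_F coassoc_F) (simp add: S_\<alpha> antipode_F)
  also have "\<dots> = F u (inv \<gamma> (\<omega> g))"
    unfolding \<omega>_eq
    by (simp add: counit_F eval2_linear[OF bilinear_linear_right[OF F]]
        eval2_linear[OF inv_\<gamma>_linear] inv_\<gamma>_la S_inv_\<alpha> d_inv_\<alpha>)
  finally show "eval2 F (\<phi> (\<omega> g)) = eval2 F [(u, inv \<gamma> (\<omega> g))]" by simp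
qed

lemma coinv_eq_range_\<omega>: "coinv_\<Gamma> = range \<omega>"
  using coinv_proj_coinv coinv_proj_in_range \<omega>_coinv by (metis subsetI subset_antisym rangeE)

lemma bij_betw_\<gamma>_coinv: "bij_betw \<gamma> coinv_\<Gamma> coinv_\<Gamma>"
proof -
  have "\<gamma> ` range \<omega> = \<omega> ` range \<alpha>" by (simp add: image_image \<omega>_\<alpha>)
  also have "\<dots> = range \<omega>" by (simp add: bij_is_surj[OF \<alpha>_bij])
  finally show ?thesis
    unfolding bij_betw_def coinv_eq_range_\<omega> by (simp add: inj_on_subset[OF bij_is_inj[OF \<gamma>_bij]])
qed

section \<open>The quantum Hom-tangent space and its pairing\<close>

abbreviation T_\<Gamma> :: "('h \<Rightarrow> 'k) set" where "T_\<Gamma> \<equiv> tangent sH u \<Delta> \<epsilon> S la d"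
abbreviation R_\<Gamma> :: "'h set" where "R_\<Gamma> \<equiv> RG \<Delta> \<epsilon> S la d"

lemma R_\<Gamma>_\<alpha>: "h \<in> R_\<Gamma> \<Longrightarrow> \<alpha> h \<in> R_\<Gamma>"
  and R_\<Gamma>_inv_\<alpha>: "h \<in> R_\<Gamma> \<Longrightarrow> inv \<alpha> h \<in> R_\<Gamma>"
  unfolding RG_def by (auto simp: \<epsilon>_\<alpha> \<omega>_\<alpha> \<omega>_inv_\<alpha> linear_zero[OF \<gamma>_linear] linear_zero[OF inv_\<gamma>_linear])

lemma R_\<Gamma>_subspace: "vH.subspace R_\<Gamma>"
  unfolding RG_def
  by (rule vH.subspaceI) (simp_all add: linear_zero[OF \<epsilon>_linear] linear_zero[OF \<omega>_linear]
      linear_add[OF \<epsilon>_linear] linear_add[OF \<omega>_linear] linear_scale[OF \<epsilon>_linear] linear_scale[OF \<omega>_linear])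

lemma tangent_linear: "X \<in> T_\<Gamma> \<Longrightarrow> linear sH (*) X"
  and tangent_unit: "X \<in> T_\<Gamma> \<Longrightarrow> X u = 0"
  and tangent_R_\<Gamma>: "X \<in> T_\<Gamma> \<Longrightarrow> h \<in> R_\<Gamma> \<Longrightarrow> X h = 0"
  unfolding tangent_def by auto

lemma tangent_comp_inv_\<alpha>: "X \<in> T_\<Gamma> \<Longrightarrow> X \<circ> inv \<alpha> \<in> T_\<Gamma>"
  unfolding tangent_def using R_\<Gamma>_inv_\<alpha> by (auto simp: o_def intro: linear_comp[OF _ inv_\<alpha>_linear])

lemma tangent_comp_\<alpha>: "X \<in> T_\<Gamma> \<Longrightarrow> X \<circ> \<alpha> \<in> T_\<Gamma>"
  unfolding tangent_def using R_\<Gamma>_\<alpha> by (auto simp: o_def \<alpha>_unit intro: linear_comp[OF _ \<alpha>_linear])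

lemma bij_betw_comp_inv_\<alpha>_tangent: "bij_betw (\<lambda>X. X \<circ> inv \<alpha>) T_\<Gamma> T_\<Gamma>"
proof (rule bij_betw_byWitness[where f' = "\<lambda>X. X \<circ> \<alpha>"])
  show "\<forall>X \<in> T_\<Gamma>. X \<circ> inv \<alpha> \<circ> \<alpha> = X" and "\<forall>X \<in> T_\<Gamma>. X \<circ> \<alpha> \<circ> inv \<alpha> = X"
    by (auto simp: o_def)
qed (use tangent_comp_inv_\<alpha> tangent_comp_\<alpha> in auto)

text \<open>This is where R_\<Gamma> enters: g1 - g2 - \<epsilon>(g1 - g2) 1 lies in R_\<Gamma> whenever \<omega>(g1) = \<omega>(g2).\<close>

lemma tangent_eq_if_\<omega>_eq:
  assumes X: "X \<in> T_\<Gamma>" and eq: "\<omega> g1 = \<omega> g2"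
  shows "X (inv \<alpha> g1) = X (inv \<alpha> g2)"
proof -
  define r where "r = g1 - g2 - sH (\<epsilon> (g1 - g2)) u"
  have "\<epsilon> r = 0" unfolding r_def by (simp add: linear_diff[OF \<epsilon>_linear] linear_scale[OF \<epsilon>_linear] \<epsilon>_unit)
  moreover have "\<omega> r = 0" unfolding r_def by (simp add: linear_diff[OF \<omega>_linear] linear_scale[OF \<omega>_linear] \<omega>_unit eq)
  ultimately have "inv \<alpha> r \<in> R_\<Gamma>" by (simp add: RG_def \<omega>_inv_\<alpha> linear_zero[OF inv_\<gamma>_linear])
  then have "X (inv \<alpha> r) = 0" by (rule tangent_R_\<Gamma>[OF X])
  then show ?thesis unfolding r_def
    by (simp add: linear_diff[OF inv_\<alpha>_linear] linear_scale[OF inv_\<alpha>_linear] linear_diff[OF tangent_linear[OF X]]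
        linear_scale[OF tangent_linear[OF X]] tangent_unit[OF X])
qed

text \<open>The SOME picks a preimage of coinv_proj v under \<omega>, which exists by coinv_proj_in_range;
  by the previous lemma the value does not depend on the choice.\<close>

definition pairing :: "('h \<Rightarrow> 'k) \<Rightarrow> 'g \<Rightarrow> 'k" where
  "pairing X v = X (inv \<alpha> (SOME g. \<omega> g = coinv_proj v))"

lemma pairing_eq:
  assumes X: "X \<in> T_\<Gamma>" and g: "\<omega> g = coinv_proj v"
  shows "pairing X v = X (inv \<alpha> g)"
proof -
  have "\<exists>g. \<omega> g = coinv_proj v" using coinv_proj_in_range[of v] by (metis rangeE)
  then have "\<omega> (SOME g. \<omega> g = coinv_proj v) = coinv_proj v" by (rule someI_ex)
  then show ?thesis unfolding pairing_def using tangent_eq_if_\<omega>_eq[OF X] g by metis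
qed

lemma pairing_\<omega>: "X \<in> T_\<Gamma> \<Longrightarrow> pairing X (\<omega> h) = X (inv \<alpha> h)"
  using pairing_eq coinv_proj_coinv[OF \<omega>_coinv, of h] by simp

lemma pairing_linear:
  assumes X: "X \<in> T_\<Gamma>" shows "linear sG (*) (pairing X)"
  unfolding linear_iff
proof (intro conjI allI vector_space_G vector_space_field)
  fix v w
  obtain a b where a: "\<omega> a = coinv_proj v" and b: "\<omega> b = coinv_proj w"
    using coinv_proj_in_range by (metis rangeE)
  have "\<omega> (a + b) = coinv_proj (v + w)"
    by (simp add: linear_add[OF \<omega>_linear] linear_add[OF coinv_proj_linear] a b)
  then show "pairing X (v + w) = pairing X v + pairing X w"
    by (simp add: pairing_eq[OF X] pairing_eq[OF X a] pairing_eq[OF X b] linear_add[OF inv_\<alpha>_linear]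
        linear_add[OF tangent_linear[OF X]])
next
  fix c v
  obtain a where a: "\<omega> a = coinv_proj v" using coinv_proj_in_range by (metis rangeE)
  have "\<omega> (sH c a) = coinv_proj (sG c v)"
    by (simp add: linear_scale[OF \<omega>_linear] linear_scale[OF coinv_proj_linear] a)
  then show "pairing X (sG c v) = c * pairing X v"
    by (simp add: pairing_eq[OF X] pairing_eq[OF X a] linear_scale[OF inv_\<alpha>_linear]
        linear_scale[OF tangent_linear[OF X]])
qed

lemma good_form_pairing: "good_form sH \<alpha> \<epsilon> sG \<gamma> la d T_\<Gamma> pairing"
  unfolding good_form_def
proof (intro conjI ballI allI)
  fix X assume X: "X \<in> T_\<Gamma>"
  show "linear sG (*) (pairing X)" by (rule pairing_linear[OF X])
  fix v
  obtain g where g: "\<omega> g = coinv_proj v" using coinv_proj_in_range by (metis rangeE)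
  have "\<omega> (\<alpha> g) = coinv_proj (\<gamma> v)" by (simp add: \<omega>_\<alpha> coinv_proj_\<gamma> g)
  then show "pairing (X \<circ> inv \<alpha>) (\<gamma> v) = pairing X v"
    using pairing_eq[OF tangent_comp_inv_\<alpha>[OF X]] pairing_eq[OF X g] by simp
next
  fix X Y v show "pairing (\<lambda>h. X h + Y h) v = pairing X v + pairing Y v" by (simp add: pairing_def)
next
  fix X c v show "pairing (\<lambda>h. c * X h) v = c * pairing X v" by (simp add: pairing_def)
next
  fix X h g assume X: "X \<in> T_\<Gamma>"
  have "\<omega> (sH (\<epsilon> h) (\<alpha> g)) = coinv_proj (la h (d g))"
    by (simp add: coinv_proj_la_d linear_scale[OF \<omega>_linear])
  then show "pairing X (la h (d g)) = \<epsilon> h * X g"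
    by (simp add: pairing_eq[OF X] linear_scale[OF inv_\<alpha>_linear] linear_scale[OF tangent_linear[OF X]])
qed

lemma good_form_unique:
  assumes B: "good_form sH \<alpha> \<epsilon> sG \<gamma> la d T_\<Gamma> B" and X: "X \<in> T_\<Gamma>"
  shows "B X v = pairing X v"
proof (rule vector_space_pair.linear_eq_on_span[OF _ _ _ _ span_la_d])
  show "vector_space_pair sG ((*) :: 'k \<Rightarrow> 'k \<Rightarrow> 'k)"
    using vector_space_G vector_space_field by (simp add: vector_space_pair_def)
  show "linear sG (*) (B X)" using B X by (simp add: good_form_def)
  show "linear sG (*) (pairing X)" by (rule pairing_linear[OF X])
  show "B X w = pairing X w" if "w \<in> {la h (d g) | h g. True}" for w
    using that B X good_form_pairing by (auto simp: good_form_def)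
qed

lemma pairing_nondegenerate_left:
  assumes X: "X \<in> T_\<Gamma>" and zero: "\<forall>v \<in> coinv_\<Gamma>. pairing X v = 0"
  shows "X = (\<lambda>h. 0)"
proof
  fix h
  have "X h = pairing X (\<omega> (\<alpha> h))" by (simp add: pairing_\<omega>[OF X])
  also have "\<dots> = 0" using zero \<omega>_coinv by blast
  finally show "X h = 0" .
qed

text \<open>A coinvariant v = \<omega>(h) with \<epsilon>(h) = 0 and v \<noteq> 0 has inv \<alpha> h outside k1 + R_\<Gamma>, so some
  functional vanishing on k1 + R_\<Gamma> (hence a tangent vector) takes the value 1 there.\<close>

lemma pairing_nondegenerate_right:
  assumes v: "v \<in> coinv_\<Gamma>" and zero: "\<forall>X \<in> T_\<Gamma>. pairing X v = 0"
  shows "v = 0"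
proof (rule ccontr)
  assume "v \<noteq> 0"
  obtain h0 where "v = \<omega> h0" using v coinv_eq_range_\<omega> by blast
  define h where "h = h0 - sH (\<epsilon> h0) u"
  have \<omega>_h: "\<omega> h = v" unfolding h_def
    by (simp add: \<open>v = \<omega> h0\<close> linear_diff[OF \<omega>_linear] linear_scale[OF \<omega>_linear] \<omega>_unit)
  have \<epsilon>_h: "\<epsilon> h = 0" unfolding h_def
    by (simp add: linear_diff[OF \<epsilon>_linear] linear_scale[OF \<epsilon>_linear] \<epsilon>_unit)
  have "inv \<alpha> h \<notin> vH.span (insert u R_\<Gamma>)"
  proof
    assume "inv \<alpha> h \<in> vH.span (insert u R_\<Gamma>)"
    then obtain c where c: "inv \<alpha> h - sH c u \<in> R_\<Gamma>"
      unfolding vH.span_insert vH.span_eq_iff[THEN iffD2, OF R_\<Gamma>_subspace] by blast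
    then have "c = 0"
      by (simp add: RG_def linear_diff[OF \<epsilon>_linear] linear_scale[OF \<epsilon>_linear] \<epsilon>_unit \<epsilon>_h)
    with c have "h \<in> R_\<Gamma>" using R_\<Gamma>_\<alpha> by fastforce
    with \<omega>_h \<open>v \<noteq> 0\<close> show False by (simp add: RG_def)
  qed
  then obtain X where X: "linear sH (*) X" "X (inv \<alpha> h) = 1" "\<forall>y \<in> vH.span (insert u R_\<Gamma>). X y = 0"
    using exists_functional_separating[OF vector_space_H] by blast
  then have "X \<in> T_\<Gamma>" unfolding tangent_def by (auto intro: vH.span_base)
  with X(2) zero show False using pairing_\<omega>[of X h] \<omega>_h by simp
qed

end

theorem mainTheorem3:
  fixes sH :: "'k::field \<Rightarrow> 'h::ab_group_add \<Rightarrow> 'h"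
    and m :: "'h \<Rightarrow> 'h \<Rightarrow> 'h" and u :: 'h and \<alpha> :: "'h \<Rightarrow> 'h"
    and \<Delta> :: "'h \<Rightarrow> ('h \<times> 'h) list" and \<epsilon> :: "'h \<Rightarrow> 'k" and S :: "'h \<Rightarrow> 'h"
    and sG :: "'k \<Rightarrow> 'g::ab_group_add \<Rightarrow> 'g" and \<gamma> :: "'g \<Rightarrow> 'g"
    and la :: "'h \<Rightarrow> 'g \<Rightarrow> 'g" and ra :: "'g \<Rightarrow> 'h \<Rightarrow> 'g"
    and d :: "'h \<Rightarrow> 'g" and \<phi> :: "'g \<Rightarrow> ('h \<times> 'g) list"
  assumes "mon_hom_hopf sH m u \<alpha> \<Delta> \<epsilon> S"
    and "hom_fodc sH m u \<alpha> sG \<gamma> la ra d"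
    and "left_covariant sH m \<alpha> \<Delta> \<epsilon> sG \<gamma> la ra d \<phi>"
  defines "T \<equiv> tangent sH u \<Delta> \<epsilon> S la d"
    and "C \<equiv> coinv sH u sG \<gamma> \<phi>"
  shows "\<exists>B. good_form sH \<alpha> \<epsilon> sG \<gamma> la d T B
          \<and> (\<forall>B'. good_form sH \<alpha> \<epsilon> sG \<gamma> la d T B' \<longrightarrow> (\<forall>X \<in> T. \<forall>v. B' X v = B X v))
          \<and> bij_betw (\<lambda>X. X \<circ> inv \<alpha>) T T
          \<and> C = range (omegaG \<Delta> S la d)
          \<and> bij_betw \<gamma> C C
          \<and> (\<forall>X \<in> T. (\<forall>v \<in> C. B X v = 0) \<longrightarrow> X = (\<lambda>h. 0))
          \<and> (\<forall>v \<in> C. (\<forall>X \<in> T. B X v = 0) \<longrightarrow> v = 0)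
          \<and> (\<forall>X \<in> T. \<forall>h. B X (omegaG \<Delta> S la d h) = X (inv \<alpha> h))"
proof -
  interpret left_covariant_hom_fodc sH m u \<alpha> \<Delta> \<epsilon> S sG \<gamma> la ra d \<phi>
    by unfold_locales (fact assms)+
  show ?thesis
    unfolding T_def C_def
    using good_form_pairing good_form_unique bij_betw_comp_inv_\<alpha>_tangent coinv_eq_range_\<omega>
      bij_betw_\<gamma>_coinv pairing_nondegenerate_left pairing_nondegenerate_right pairing_\<omega>
    by (intro exI[of _ pairing]) blast
qed

end
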